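(* Let $J$ be a finite set with $n=|J|\ge2$, let $E$ be a partition of $J$ into pairs, and let $F:\{0,1\}^J\to\mathbb{Q}_{\ge0}$ be even-windable. For $k\ge0$ let $\Omega_k$ be the set of $k$-assignments $x$ (with respect to $E$) with $F(x)>0$, let $\Omega=\Omega_0\cup\Omega_2$, and assume $\Omega_0\neq\emptyset$. Define $P:\Omega\times\Omega\to[0,1]$ by $P(x,y)=\frac{2}{n^2}\min(1,F(y)/F(x))$ if $d(x,y)=2$, $P(x,x)=1-\frac2{n^2}\sum_{y'\in\Omega:d(x,y')=2}\min(1,F(y')/F(x))$, and $P(x,y)=0$ otherwise. Let $\pi(x)=F(x)/\sum_{y\in\Omega}F(y)$ for $x\in\Omega$ and $\pi(\Omega_0)=\sum_{x\in\Omega_0}\pi(x)$. Then for all $x\in\Omega$ and all integers $t\ge0$, $$\tfrac12\sum_{y\in\Omega}|P^t(x,y)-\pi(y)|\le\tfrac12\pi(x)^{-1/2}\exp\!\left(-t\,\pi(\Omega_0)^2/n^4\right),$$ where $P^t$ is the $t$-th matrix power.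
   Context: For $x,y\in\{0,1\}^J$, $x\oplus y$ is coordinatewise addition mod 2, $d(x,y)=|\{i:x_i\ne y_i\}|$, and $\mathbf S$ is the characteristic vector of $S\subseteq J$. For a partition $E$ of $J$ into pairs, a $k$-assignment is a configuration $x\in\{0,1\}^J$ such that $x_i\ne x_j$ for exactly $k$ pairs $\{i,j\}\in E$. For $z\in\{0,1\}^J$, $\mathrm{Match}(z)$ is the set of partitions of $\{i:z_i=1\}$ into pairs (empty if $\sum z_i$ is odd). $F:\{0,1\}^J\to\mathbb{Q}_{\ge0}$ is even-windable if there exist $B(x,y,M)\ge0$ for all $x,y\in\{0,1\}^J$, $M\in\mathrm{Match}(x\oplus y)$, with (EW1) $F(x)F(y)=\sum_{M\in\mathrm{Match}(x\oplus y)}B(x,y,M)$ for all $x,y$, and (EW2) $B(x,y,M)=B(x\oplus\mathbf S,y\oplus\mathbf S,M)$ for all $x,y$ and all $S\in M\in\mathrm{Match}(x\oplus y)$. *)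

theory Defs
  imports Complex_Main
begin

text \<open>Configurations x in {0,1}^J are encoded by subsets of J (x_i = 1 iff i in x).
  Then x XOR y is the symmetric difference, and d(x,y) its cardinality.\<close>

definition sdiff :: "'a set \<Rightarrow> 'a set \<Rightarrow> 'a set" where
  "sdiff x y = (x - y) \<union> (y - x)"

definition hdist :: "'a set \<Rightarrow> 'a set \<Rightarrow> nat" where
  "hdist x y = card (sdiff x y)"

definition pair_partition :: "'a set \<Rightarrow> 'a set set \<Rightarrow> bool" where
  "pair_partition A M \<longleftrightarrow>
     (\<forall>S\<in>M. S \<subseteq> A \<and> card S = 2) \<and>
     (\<forall>S\<in>M. \<forall>T\<in>M. S \<noteq> T \<longrightarrow> S \<inter> T = {}) \<and>
     \<Union>M = A"

definition Match :: "'a set \<Rightarrow> 'a set set set" where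
  "Match z = {M. pair_partition z M}"

text \<open>x is a k-assignment: x_i \<noteq> x_j for exactly k pairs {i,j} in E.\<close>
definition is_k_assignment :: "'a set set \<Rightarrow> nat \<Rightarrow> 'a set \<Rightarrow> bool" where
  "is_k_assignment E k x \<longleftrightarrow> card {e\<in>E. card (e \<inter> x) = 1} = k"

definition even_windable :: "'a set \<Rightarrow> ('a set \<Rightarrow> rat) \<Rightarrow> bool" where
  "even_windable J F \<longleftrightarrow>
     (\<exists>B :: 'a set \<Rightarrow> 'a set \<Rightarrow> 'a set set \<Rightarrow> rat.
        (\<forall>x y M. x \<subseteq> J \<longrightarrow> y \<subseteq> J \<longrightarrow> M \<in> Match (sdiff x y) \<longrightarrow> B x y M \<ge> 0) \<and>
        (\<forall>x y. x \<subseteq> J \<longrightarrow> y \<subseteq> J \<longrightarrow> F x * F y = (\<Sum>M\<in>Match (sdiff x y). B x y M)) \<and>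
        (\<forall>x y M S. x \<subseteq> J \<longrightarrow> y \<subseteq> J \<longrightarrow> M \<in> Match (sdiff x y) \<longrightarrow> S \<in> M \<longrightarrow>
            B x y M = B (sdiff x S) (sdiff y S) M))"

definition Omega_k :: "'a set \<Rightarrow> 'a set set \<Rightarrow> ('a set \<Rightarrow> rat) \<Rightarrow> nat \<Rightarrow> 'a set set" where
  "Omega_k J E F k = {x. x \<subseteq> J \<and> is_k_assignment E k x \<and> F x > 0}"

definition Omega :: "'a set \<Rightarrow> 'a set set \<Rightarrow> ('a set \<Rightarrow> rat) \<Rightarrow> 'a set set" where
  "Omega J E F = Omega_k J E F 0 \<union> Omega_k J E F 2"

definition Pmat :: "'a set \<Rightarrow> 'a set set \<Rightarrow> ('a set \<Rightarrow> rat) \<Rightarrow> 'a set \<Rightarrow> 'a set \<Rightarrow> real" where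
  "Pmat J E F x y =
     (let n = real (card J); Om = Omega J E F in
      if hdist x y = 2 then 2 / n^2 * min 1 (real_of_rat (F y) / real_of_rat (F x))
      else if x = y then
        1 - 2 / n^2 * (\<Sum>y'\<in>{y'\<in>Om. hdist x y' = 2}. min 1 (real_of_rat (F y') / real_of_rat (F x)))
      else 0)"

fun Ppow :: "'a set \<Rightarrow> 'a set set \<Rightarrow> ('a set \<Rightarrow> rat) \<Rightarrow> nat \<Rightarrow> 'a set \<Rightarrow> 'a set \<Rightarrow> real" where
  "Ppow J E F 0 x y = (if x = y then 1 else 0)"
| "Ppow J E F (Suc t) x y = (\<Sum>z\<in>Omega J E F. Ppow J E F t x z * Pmat J E F z y)"

definition pi_dist :: "'a set \<Rightarrow> 'a set set \<Rightarrow> ('a set \<Rightarrow> rat) \<Rightarrow> 'a set \<Rightarrow> real" where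
  "pi_dist J E F x = real_of_rat (F x) / (\<Sum>y\<in>Omega J E F. real_of_rat (F y))"

end

theory Submission
  imports Defs "HOL-Analysis.Convex"
begin

text \<open>The Metropolis chain is reversible with respect to \<open>\<pi>\<close> and lazy (\<open>P(x,x) \<ge> 1/n\<close>), so
  one step contracts the \<open>\<chi>\<^sup>2\<close>-distance to \<open>\<pi>\<close> by a factor \<open>1 - 2/(n C)\<close>, where \<open>C\<close> is
  a Poincare constant; Cauchy-Schwarz turns this into the \<open>L\<^sup>1\<close> bound.  The Poincare
  inequality, with \<open>C = n\<^sup>3 (Z/Z\<^sub>0)\<^sup>2\<close>, comes from canonical paths weighted by the windings
  \<open>B(x,y,M)\<close>: two configurations are joined by flipping the pairs of \<open>M\<close> one at a time, in
  an order that never cuts more than two pairs of \<open>E\<close>.  Invariance of \<open>B\<close> under flips keeps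
  every intermediate configuration in \<open>\<Omega>\<close> and bounds the weight routed through a single move
  \<open>z \<rightarrow> z'\<close> by \<open>min (F z) (F z') \<cdot> Z\<close>.  Configurations in \<open>\<Omega>\<^sub>2\<close> are compared with
  \<open>\<Omega>\<^sub>0\<close> by routing them there first, which is where \<open>\<pi>(\<Omega>\<^sub>0)\<close> enters.\<close>

lemma mem_sdiff: "p \<in> sdiff A B \<longleftrightarrow> (p \<in> A) \<noteq> (p \<in> B)"
  by (auto simp: sdiff_def)

lemma sdiff_commute: "sdiff x y = sdiff y x"
  by (auto simp: sdiff_def)

lemma sdiff_sdiff_right [simp]: "sdiff (sdiff x A) A = x"
  by (auto simp: sdiff_def)

lemma sdiff_sdiff_left [simp]: "sdiff x (sdiff x A) = A"
  by (auto simp: sdiff_def)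

lemma sdiff_sdiff_both [simp]: "sdiff (sdiff x A) (sdiff y A) = sdiff x y"
  by (auto simp: sdiff_def)

lemma sdiff_left_cancel [simp]: "sdiff x A = sdiff x B \<longleftrightarrow> A = B"
  by (metis sdiff_sdiff_left)

lemma sdiff_right_cancel [simp]: "sdiff A x = sdiff B x \<longleftrightarrow> A = B"
  by (metis sdiff_sdiff_right)

lemma sdiff_self [simp]: "sdiff x x = {}"
  by (auto simp: sdiff_def)

lemma sdiff_empty [simp]: "sdiff x {} = x" "sdiff {} x = x"
  by (auto simp: sdiff_def)

lemma sdiff_Un_disjoint: "A \<inter> S = {} \<Longrightarrow> sdiff x (A \<union> S) = sdiff (sdiff x A) S"
  by (auto simp: sdiff_def)

lemma sdiff_subset: "x \<subseteq> J \<Longrightarrow> y \<subseteq> J \<Longrightarrow> sdiff x y \<subseteq> J"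
  by (auto simp: sdiff_def)

lemma hdist_self [simp]: "hdist x x = 0"
  by (simp add: hdist_def sdiff_def)

lemma hdist_commute: "hdist x y = hdist y x"
  by (simp add: hdist_def sdiff_commute)

lemma hdist_sdiff [simp]: "hdist x (sdiff x S) = card S"
  by (simp add: hdist_def)

lemma Match_iff: "M \<in> Match D \<longleftrightarrow> pair_partition D M"
  by (simp add: Match_def)

lemma pair_partition_card: "pair_partition A M \<Longrightarrow> S \<in> M \<Longrightarrow> card S = 2"
  by (simp add: pair_partition_def)

lemma pair_partition_subset: "pair_partition A M \<Longrightarrow> S \<in> M \<Longrightarrow> S \<subseteq> A"
  by (simp add: pair_partition_def)

lemma pair_partition_Union: "pair_partition A M \<Longrightarrow> \<Union>M = A"
  by (simp add: pair_partition_def)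

lemma pair_partition_disjoint:
  "pair_partition A M \<Longrightarrow> S \<in> M \<Longrightarrow> T \<in> M \<Longrightarrow> S \<noteq> T \<Longrightarrow> S \<inter> T = {}"
  by (simp add: pair_partition_def)

lemma pair_partition_disjoint_Union:
  assumes "pair_partition A M" "S \<in> M" "N \<subseteq> M" "S \<notin> N"
  shows "S \<inter> \<Union>N = {}"
proof -
  have "S \<inter> T = {}" if "T \<in> N" for T
    using pair_partition_disjoint[OF assms(1,2)] assms(3,4) that by blast
  then show ?thesis
    by blast
qed

lemma finite_pair_partition: "pair_partition A M \<Longrightarrow> finite A \<Longrightarrow> finite M"
  by (meson PowI finite_Pow_iff finite_subset pair_partition_subset subsetI)

lemma card_pair_partition:
  assumes "pair_partition A M" "finite A"
  shows "card A = 2 * card M"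
proof -
  have "pairwise disjnt M"
    using assms(1) unfolding pair_partition_def pairwise_def disjnt_def by blast
  then have "card (\<Union>M) = (\<Sum>S\<in>M. card S)"
    using assms(1) pair_partition_card[OF assms(1)]
    by (intro card_Union_disjoint) (auto intro: card_ge_0_finite)
  then show ?thesis
    using assms(1) by (simp add: pair_partition_Union pair_partition_card)
qed

lemma finite_Match: "finite D \<Longrightarrow> finite (Match D)"
  by (rule finite_subset[of _ "Pow (Pow D)"]) (auto simp: Match_def dest: pair_partition_subset)

definition cut_pairs :: "'a set set \<Rightarrow> 'a set \<Rightarrow> 'a set set" where
  "cut_pairs E U = {e\<in>E. card (e \<inter> U) = 1}"

lemma cut_pairs_empty [simp]: "cut_pairs E {} = {}"
  by (simp add: cut_pairs_def)

lemma is_k_assignment_iff: "is_k_assignment E k x \<longleftrightarrow> card (cut_pairs E x) = k"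
  by (simp add: is_k_assignment_def cut_pairs_def)

lemma card_2_obtain_other:
  assumes "card S = 2" "b \<in> S"
  obtains v where "S = {b, v}" "v \<noteq> b"
proof -
  obtain p q where "S = {p, q}" "p \<noteq> q"
    using assms(1) unfolding card_2_iff by blast
  then show ?thesis
    using that assms(2) by (metis insert_commute insert_iff singletonD)
qed

lemma card_doubleton_Int_eq_1:
  "p \<noteq> q \<Longrightarrow> card ({p, q} \<inter> X) = 1 \<longleftrightarrow> (p \<in> X) \<noteq> (q \<in> X)"
  by (cases "p \<in> X"; cases "q \<in> X") (auto simp: Int_insert_left)

locale paired_set =
  fixes J :: "'a set" and E :: "'a set set"
  assumes finite_J: "finite J" and pair_partition_E: "pair_partition J E"
begin

lemma card_pair: "e \<in> E \<Longrightarrow> card e = 2"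
  using pair_partition_E pair_partition_card by blast

lemma pair_covering: "p \<in> J \<Longrightarrow> \<exists>e\<in>E. p \<in> e"
  using pair_partition_E pair_partition_Union by blast

lemma pairs_disjoint: "e \<in> E \<Longrightarrow> e' \<in> E \<Longrightarrow> e \<noteq> e' \<Longrightarrow> e \<inter> e' = {}"
  using pair_partition_E unfolding pair_partition_def by blast

lemma finite_cut_pairs: "finite (cut_pairs E U)"
  using finite_pair_partition[OF pair_partition_E finite_J] by (simp add: cut_pairs_def)

lemma cut_pairs_sdiff: "cut_pairs E (sdiff A B) = sdiff (cut_pairs E A) (cut_pairs E B)"
proof -
  have "card (e \<inter> sdiff A B) = 1 \<longleftrightarrow> (card (e \<inter> A) = 1) \<noteq> (card (e \<inter> B) = 1)" if e: "e \<in> E" for e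
  proof -
    obtain p q where "e = {p, q}" "p \<noteq> q"
      using card_pair[OF e] unfolding card_2_iff by blast
    then show ?thesis
      using card_doubleton_Int_eq_1 mem_sdiff by metis
  qed
  then show ?thesis
    by (auto simp: cut_pairs_def mem_sdiff)
qed

lemma cut_pairs_doubleton:
  assumes "p \<noteq> q" "p \<in> e" "q \<in> e'" "e \<in> E" "e' \<in> E"
  shows "cut_pairs E {p, q} = (if e = e' then {} else {e, e'})"
proof -
  have "f \<in> cut_pairs E {p, q} \<longleftrightarrow> (f = e) \<noteq> (f = e')" if "f \<in> E" for f
  proof -
    have "p \<in> f \<longleftrightarrow> f = e" "q \<in> f \<longleftrightarrow> f = e'"
      using assms that pairs_disjoint by blast+
    moreover have "card (f \<inter> {p, q}) = card ({p, q} \<inter> f)"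
      by (simp only: Int_commute)
    ultimately show ?thesis
      using that card_doubleton_Int_eq_1[OF assms(1), of f] by (simp add: cut_pairs_def)
  qed
  moreover have "cut_pairs E {p, q} \<subseteq> E"
    by (simp add: cut_pairs_def)
  ultimately have "cut_pairs E {p, q} = {f\<in>E. (f = e) \<noteq> (f = e')}"
    by blast
  then show ?thesis
    using assms(4,5) by auto
qed

lemma card_cut_pairs_of_pair:
  assumes "S \<subseteq> J" "card S = 2"
  shows "card (cut_pairs E S) \<in> {0, 2}"
proof -
  obtain p q where pq: "S = {p, q}" "p \<noteq> q"
    using assms(2) unfolding card_2_iff by blast
  have "p \<in> J" "q \<in> J"
    using assms(1) pq(1) by auto
  then obtain e e' where e: "e \<in> E" "p \<in> e" and e': "e' \<in> E" "q \<in> e'"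
    by (meson pair_covering)
  from cut_pairs_doubleton[OF pq(2) e(2) e'(2) e(1) e'(1)] show ?thesis
    unfolding pq(1) by (cases "e = e'") auto
qed

lemma not_cut_pairs_Int:
  assumes "U \<subseteq> D" "v \<in> D - U" "v \<in> e"
  shows "e \<notin> cut_pairs E U \<inter> cut_pairs E D"
proof
  assume "e \<in> cut_pairs E U \<inter> cut_pairs E D"
  then obtain u d where u: "e \<inter> U = {u}" and d: "e \<inter> D = {d}"
    unfolding cut_pairs_def One_nat_def card_1_singleton_iff by blast
  have "u \<in> e" "u \<in> U"
    using u by auto
  then have "u = d"
    using d assms(1) by auto
  moreover have "v = d"
    using d assms(2,3) by auto
  ultimately show False
    using \<open>u \<in> U\<close> assms(2) by simp
qed

text \<open>The combinatorial core of the path construction: a pair \<open>f\<close> that is cut by the part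
  \<open>D - \<Union>N\<close> of \<open>D\<close> not yet flipped meets it in a single point \<open>b\<close>; flipping the pair
  \<open>S = {b, v}\<close> of the matching that covers \<open>b\<close> heals \<open>f\<close> and cuts the pair \<open>e\<close> through \<open>v\<close>.\<close>
lemma flip_next_pair:
  assumes M: "pair_partition D M" and "D \<subseteq> J" and N: "N \<subseteq> M"
    and f: "f \<in> cut_pairs E (D - \<Union>N)"
  shows "\<exists>S\<in>M - N. \<exists>e. e \<noteq> f \<and> e \<notin> cut_pairs E (\<Union>N) \<inter> cut_pairs E D \<and>
           cut_pairs E (\<Union>N \<union> S) = sdiff (cut_pairs E (\<Union>N)) {f, e}"
proof -
  define U where "U = \<Union>N"
  have "U \<subseteq> D"
    unfolding U_def using pair_partition_Union[OF M] N by blast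
  have fE: "f \<in> E" and "card (f \<inter> (D - U)) = 1"
    using f by (auto simp: cut_pairs_def U_def)
  then obtain b where b: "f \<inter> (D - U) = {b}"
    using card_1_singletonE by blast
  then have bf: "b \<in> f" and bDU: "b \<in> D - U"
    by auto
  then obtain S where S: "S \<in> M" "b \<in> S"
    using pair_partition_Union[OF M] by blast
  have "S \<notin> N"
    using S(2) bDU unfolding U_def by blast
  then have SU: "S \<inter> U = {}"
    unfolding U_def using pair_partition_disjoint_Union[OF M S(1) N] by simp
  obtain v where v: "S = {b, v}" "v \<noteq> b"
    using card_2_obtain_other[OF pair_partition_card[OF M S(1)] S(2)] .
  have vDU: "v \<in> D - U"
    using pair_partition_subset[OF M S(1)] SU v(1) by auto
  then obtain e where e: "e \<in> E" "v \<in> e"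
    using pair_covering \<open>D \<subseteq> J\<close> by blast
  have "e \<noteq> f"
  proof
    assume "e = f"
    then have "v \<in> f \<inter> (D - U)"
      using e(2) vDU by simp
    then show False
      unfolding b using v(2) by simp
  qed
  have "U \<union> S = sdiff U S"
    using SU by (auto simp: sdiff_def)
  moreover have "cut_pairs E S = {f, e}"
    using cut_pairs_doubleton[OF v(2)[symmetric] bf e(2) fE e(1)] v(1) \<open>e \<noteq> f\<close> by simp
  ultimately have "cut_pairs E (U \<union> S) = sdiff (cut_pairs E U) {f, e}"
    by (simp add: cut_pairs_sdiff)
  moreover have "S \<in> M - N"
    using S(1) \<open>S \<notin> N\<close> by simp
  ultimately show ?thesis
    using \<open>e \<noteq> f\<close> not_cut_pairs_Int[OF \<open>U \<subseteq> D\<close> vDU e(2)] unfolding U_def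
    by (intro bexI[where x = S] exI[where x = e] conjI)
qed

end

section \<open>Flipping a matching pair by pair\<close>

definition flipped :: "'b set list \<Rightarrow> nat \<Rightarrow> 'b set" where
  "flipped ps i = \<Union>(set (take i ps))"

lemma flipped_0 [simp]: "flipped ps 0 = {}"
  by (simp add: flipped_def)

lemma flipped_length: "flipped ps (length ps) = \<Union>(set ps)"
  by (simp add: flipped_def)

lemma flipped_Suc: "i < length ps \<Longrightarrow> flipped ps (Suc i) = flipped ps i \<union> ps ! i"
  by (simp add: flipped_def take_Suc_conv_app_nth Un_commute)

lemma flipped_disjoint_nth:
  assumes "pair_partition D M" "distinct ps" "set ps \<subseteq> M" "i < length ps"
  shows "flipped ps i \<inter> ps ! i = {}"
proof -
  have "distinct (take i ps @ ps ! i # drop (Suc i) ps)"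
    using assms(2) id_take_nth_drop[OF assms(4)] by metis
  then have "ps ! i \<notin> set (take i ps)"
    by simp
  moreover have "ps ! i \<in> M" "set (take i ps) \<subseteq> M"
    using assms(3,4) set_take_subset[of i ps] by auto
  ultimately have "ps ! i \<inter> \<Union>(set (take i ps)) = {}"
    using pair_partition_disjoint_Union[OF assms(1)] by blast
  then show ?thesis
    unfolding flipped_def by blast
qed

lemma sdiff_flipped_Suc:
  assumes "pair_partition D M" "distinct ps" "set ps \<subseteq> M" "i < length ps"
  shows "sdiff x (flipped ps (Suc i)) = sdiff (sdiff x (flipped ps i)) (ps ! i)"
  using flipped_disjoint_nth[OF assms] by (simp add: flipped_Suc[OF assms(4)] sdiff_Un_disjoint)

lemma length_le_card_pair_partition:
  assumes "pair_partition D M" "finite D" "distinct ps" "set ps \<subseteq> M"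
  shows "2 * length ps \<le> card D"
proof -
  have "length ps \<le> card M"
    using assms by (metis card_mono distinct_card finite_pair_partition)
  then show ?thesis
    using card_pair_partition[OF assms(1,2)] by simp
qed

lemma exists_list_by_extension:
  assumes "finite M" and "Inv []"
    and step: "\<And>ps. distinct ps \<Longrightarrow> set ps \<subseteq> M \<Longrightarrow> Inv ps \<Longrightarrow> \<not> Done ps \<Longrightarrow>
                 \<exists>S\<in>M - set ps. Inv (ps @ [S])"
  shows "\<exists>ps. distinct ps \<and> set ps \<subseteq> M \<and> Done ps \<and> (\<forall>i\<le>length ps. Inv (take i ps))"
proof -
  have "\<exists>qs. distinct qs \<and> set qs \<subseteq> M \<and> Done qs \<and> (\<forall>i\<le>length qs. Inv (take i qs))"
    if "distinct ps" "set ps \<subseteq> M" "\<forall>i\<le>length ps. Inv (take i ps)" for ps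
    using that
  proof (induction "card (M - set ps)" arbitrary: ps rule: less_induct)
    case less
    show ?case
    proof (cases "Done ps")
      case True
      with less.prems show ?thesis
        by blast
    next
      case False
      moreover have "Inv ps"
        using less.prems(3) by (metis order_refl take_all)
      ultimately obtain S where S: "S \<in> M - set ps" "Inv (ps @ [S])"
        using step less.prems(1,2) by blast
      have "card (M - set (ps @ [S])) < card (M - set ps)"
        using S(1) \<open>finite M\<close> by (intro psubset_card_mono) auto
      moreover have "distinct (ps @ [S])" "set (ps @ [S]) \<subseteq> M"
        using less.prems(1,2) S(1) by auto
      moreover have "\<forall>i\<le>length (ps @ [S]). Inv (take i (ps @ [S]))"
        using less.prems(3) S(2) by (auto simp: le_Suc_eq)
      ultimately show ?thesis
        by (rule less.hyps)
    qed
  qed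
  from this[of "[]"] show ?thesis
    using \<open>Inv []\<close> by simp
qed

lemma Union_set_snoc: "\<Union>(set (ps @ [S])) = \<Union>(set ps) \<union> S"
  by auto

lemma card_sdiff_doubleton:
  assumes "e \<noteq> e'" "e \<in> X" "card X = 2"
  shows "card (sdiff {e, e'} X) \<in> {0, 2}"
proof -
  obtain f where f: "X = {e, f}" "f \<noteq> e"
    using assms(2,3) unfolding card_2_iff by auto
  show ?thesis
  proof (cases "f = e'")
    case False
    then have "sdiff {e, e'} X = {e', f}"
      using f assms(1) by (auto simp: sdiff_def)
    with False show ?thesis
      by simp
  qed (use f in \<open>simp add: sdiff_def\<close>)
qed

context paired_set
begin

lemma cut_pairs_diff:
  "U \<subseteq> D \<Longrightarrow> cut_pairs E (D - U) = sdiff (cut_pairs E D) (cut_pairs E U)"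
proof -
  assume "U \<subseteq> D"
  then have "D - U = sdiff D U"
    by (auto simp: sdiff_def)
  then show ?thesis
    by (simp add: cut_pairs_sdiff)
qed

lemma cut_pairs_Un_pair:
  assumes "pair_partition D M" "D \<subseteq> J" "N \<subseteq> M" "S \<in> M - N"
  shows "cut_pairs E (\<Union>N \<union> S) = sdiff (cut_pairs E (\<Union>N)) (cut_pairs E S)"
proof -
  have "\<Union>N \<union> S = sdiff (\<Union>N) S"
    using pair_partition_disjoint_Union[of D M S N] assms by (auto simp: sdiff_def)
  then show ?thesis
    by (simp add: cut_pairs_sdiff)
qed

lemma cut_free_enumeration_step:
  assumes M: "pair_partition D M" and D: "D \<subseteq> J" "cut_pairs E D = {}"
    and N: "N \<subseteq> M" "N \<noteq> M" "card (cut_pairs E (\<Union>N)) \<in> {0, 2}"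
  shows "\<exists>S\<in>M - N. card (cut_pairs E (\<Union>N \<union> S)) \<in> {0, 2}"
proof (cases "cut_pairs E (\<Union>N) = {}")
  case True
  obtain S where S: "S \<in> M - N"
    using N(1,2) by blast
  then have "card (cut_pairs E S) \<in> {0, 2}"
    using card_cut_pairs_of_pair pair_partition_subset[OF M] pair_partition_card[OF M] D(1)
    by (meson DiffD1 subset_trans)
  moreover have "cut_pairs E (\<Union>N \<union> S) = cut_pairs E S"
    using cut_pairs_Un_pair[OF M D(1) N(1) S] True by simp
  ultimately have "card (cut_pairs E (\<Union>N \<union> S)) \<in> {0, 2}"
    by simp
  with S show ?thesis
    by blast
next
  case False
  define U where "U = \<Union>N"
  have "card (cut_pairs E U) = 2"
    using False N(3) finite_cut_pairs[of U] unfolding U_def by auto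
  then obtain f g where fg: "cut_pairs E U = {f, g}" "f \<noteq> g"
    unfolding card_2_iff by blast
  have "U \<subseteq> D"
    using N(1) pair_partition_Union[OF M] unfolding U_def by blast
  then have "cut_pairs E (D - U) = sdiff (cut_pairs E D) (cut_pairs E U)"
    by (rule cut_pairs_diff)
  then have "f \<in> cut_pairs E (D - U)"
    unfolding D(2) fg(1) by simp
  from flip_next_pair[OF M D(1) N(1) this[unfolded U_def]]
  obtain S e where S: "S \<in> M - N" "e \<noteq> f" "cut_pairs E (U \<union> S) = sdiff {f, g} {f, e}"
    unfolding U_def[symmetric] fg(1) by (elim bexE exE conjE) (rule that, assumption+)
  have "sdiff {f, g} {f, e} = (if g = e then {} else {g, e})"
    using fg(2) S(2) by (auto simp: sdiff_def)
  then have "card (cut_pairs E (U \<union> S)) \<in> {0, 2}"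
    using S(3) by (cases "g = e") auto
  with S(1) show ?thesis
    unfolding U_def by blast
qed

lemma exists_cut_free_enumeration:
  assumes M: "pair_partition D M" and D: "D \<subseteq> J" "cut_pairs E D = {}"
  shows "\<exists>ps. distinct ps \<and> set ps = M \<and>
           (\<forall>i\<le>length ps. card (cut_pairs E (flipped ps i)) \<in> {0, 2})"
proof -
  define Inv where "Inv ps \<longleftrightarrow> card (cut_pairs E (\<Union>(set ps))) \<in> {0, 2}" for ps
  have "finite M"
    using finite_pair_partition[OF M] D(1) finite_J finite_subset by blast
  moreover have "Inv []"
    by (simp add: Inv_def)
  moreover have "\<exists>S\<in>M - set ps. Inv (ps @ [S])" if "set ps \<subseteq> M" "Inv ps" "set ps \<noteq> M" for ps
    using cut_free_enumeration_step[OF M D that(1,3) that(2)[unfolded Inv_def]]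
    unfolding Inv_def by (simp only: Union_set_snoc)
  ultimately have "\<exists>ps. distinct ps \<and> set ps \<subseteq> M \<and> set ps = M \<and> (\<forall>i\<le>length ps. Inv (take i ps))"
    by (rule exists_list_by_extension)
  then show ?thesis
    unfolding Inv_def flipped_def by blast
qed

lemma two_cut_route_step:
  assumes M: "pair_partition D M" and D: "D \<subseteq> J" and e12: "cut_pairs E D = {e1, e2}" "e1 \<noteq> e2"
    and N: "N \<subseteq> M" "N = {} \<or> e1 \<in> cut_pairs E (\<Union>N) \<and> card (cut_pairs E (\<Union>N)) = 2"
      "cut_pairs E (\<Union>N) \<noteq> cut_pairs E D"
  shows "\<exists>S\<in>M - N. e1 \<in> cut_pairs E (\<Union>N \<union> S) \<and> card (cut_pairs E (\<Union>N \<union> S)) = 2"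
proof -
  define U where "U = \<Union>N"
  have "U \<subseteq> D"
    using N(1) pair_partition_Union[OF M] unfolding U_def by blast
  then have cut_rest: "cut_pairs E (D - U) = sdiff {e1, e2} (cut_pairs E U)"
    unfolding e12(1)[symmetric] by (rule cut_pairs_diff)
  txt \<open>The pair \<open>f\<close> to be healed next is \<open>e1\<close> itself at the start, and afterwards the
    partner of \<open>e1\<close> in the current cut.\<close>
  obtain f where f: "f \<in> cut_pairs E (D - U)" "sdiff (cut_pairs E U) {f} = {e1}"
    "f = e1 \<or> e1 \<in> cut_pairs E U"
  proof (cases "N = {}")
    case True
    then show ?thesis
      using that[of e1] cut_rest unfolding U_def by (simp add: sdiff_def)
  next
    case False
    then have "e1 \<in> cut_pairs E U" "card (cut_pairs E U) = 2"
      using N(2) unfolding U_def by auto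
    then have "card (cut_pairs E U - {e1}) = 1"
      by (simp add: finite_cut_pairs)
    then obtain f where "cut_pairs E U - {e1} = {f}"
      by (rule card_1_singletonE)
    then have "cut_pairs E U = {e1, f}" "f \<noteq> e1"
      using \<open>e1 \<in> cut_pairs E U\<close> by auto
    moreover have "f \<noteq> e2"
      using N(3) calculation(1) e12(1) unfolding U_def by auto
    ultimately show ?thesis
      using that[of f] cut_rest e12(2) by (auto simp: sdiff_def)
  qed
  from flip_next_pair[OF M D N(1) f(1)[unfolded U_def]]
  obtain S e where S: "S \<in> M - N" "e \<noteq> f" "e \<notin> cut_pairs E U \<inter> cut_pairs E D"
    "cut_pairs E (U \<union> S) = sdiff (cut_pairs E U) {f, e}"
    unfolding U_def[symmetric] by (elim bexE exE conjE) (rule that, assumption+)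
  have "e \<noteq> e1"
    using S(2,3) f(3) e12(1) by auto
  have "sdiff (cut_pairs E U) {f, e} = sdiff (sdiff (cut_pairs E U) {f}) {e}"
    using S(2) by (auto simp: sdiff_def)
  also have "\<dots> = {e1, e}"
    using f(2) \<open>e \<noteq> e1\<close> by (auto simp: sdiff_def)
  finally have "cut_pairs E (U \<union> S) = {e1, e}"
    using S(4) by simp
  then have "e1 \<in> cut_pairs E (U \<union> S) \<and> card (cut_pairs E (U \<union> S)) = 2"
    using \<open>e \<noteq> e1\<close> by simp
  with S(1) show ?thesis
    unfolding U_def by blast
qed

lemma exists_two_cut_route:
  assumes M: "pair_partition D M" and D: "D \<subseteq> J" "card (cut_pairs E D) = 2"
  shows "\<exists>ps. distinct ps \<and> set ps \<subseteq> M \<and> cut_pairs E (\<Union>(set ps)) = cut_pairs E D \<and>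
           (\<forall>i\<le>length ps. card (cut_pairs E (flipped ps i)) \<in> {0, 2} \<and>
              card (sdiff (cut_pairs E D) (cut_pairs E (flipped ps i))) \<in> {0, 2})"
proof -
  obtain e1 e2 where e12: "cut_pairs E D = {e1, e2}" "e1 \<noteq> e2"
    using D(2) unfolding card_2_iff by blast
  define Inv where
    "Inv ps \<longleftrightarrow> ps = [] \<or> e1 \<in> cut_pairs E (\<Union>(set ps)) \<and> card (cut_pairs E (\<Union>(set ps))) = 2"
    for ps
  have "finite M"
    using finite_pair_partition[OF M] D(1) finite_J finite_subset by blast
  moreover have "Inv []"
    by (simp add: Inv_def)
  moreover have "\<exists>S\<in>M - set ps. Inv (ps @ [S])"
    if ps: "set ps \<subseteq> M" "Inv ps" "cut_pairs E (\<Union>(set ps)) \<noteq> cut_pairs E D" for ps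
  proof -
    have "set ps = {} \<or> e1 \<in> cut_pairs E (\<Union>(set ps)) \<and> card (cut_pairs E (\<Union>(set ps))) = 2"
      using ps(2) unfolding Inv_def by auto
    from two_cut_route_step[OF M D(1) e12 ps(1) this ps(3)] show ?thesis
      unfolding Inv_def Union_set_snoc by blast
  qed
  ultimately have "\<exists>ps. distinct ps \<and> set ps \<subseteq> M \<and> cut_pairs E (\<Union>(set ps)) = cut_pairs E D \<and>
      (\<forall>i\<le>length ps. Inv (take i ps))"
    by (rule exists_list_by_extension)
  moreover have "card (cut_pairs E (\<Union>(set ps))) \<in> {0, 2} \<and>
      card (sdiff (cut_pairs E D) (cut_pairs E (\<Union>(set ps)))) \<in> {0, 2}" if "Inv ps" for ps
  proof (cases "ps = []")
    case True
    then show ?thesis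
      using D(2) by simp
  next
    case False
    with that show ?thesis
      unfolding Inv_def e12(1) using card_sdiff_doubleton[OF e12(2)] by auto
  qed
  ultimately show ?thesis
    unfolding flipped_def by (meson order_refl)
qed

definition cut_free_route :: "'a set set \<Rightarrow> 'a set list" where
  "cut_free_route M = (SOME ps. distinct ps \<and> set ps = M \<and>
     (\<forall>i\<le>length ps. card (cut_pairs E (flipped ps i)) \<in> {0, 2}))"

lemma cut_free_route_spec:
  assumes "pair_partition D M" "D \<subseteq> J" "cut_pairs E D = {}"
  shows "distinct (cut_free_route M) \<and> set (cut_free_route M) = M \<and>
    (\<forall>i\<le>length (cut_free_route M). card (cut_pairs E (flipped (cut_free_route M) i)) \<in> {0, 2})"
  unfolding cut_free_route_def by (rule someI_ex) (rule exists_cut_free_enumeration[OF assms])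

definition two_cut_route :: "'a set set \<Rightarrow> 'a set list" where
  "two_cut_route M = (SOME ps. distinct ps \<and> set ps \<subseteq> M \<and>
     cut_pairs E (\<Union>(set ps)) = cut_pairs E (\<Union>M) \<and>
     (\<forall>i\<le>length ps. card (cut_pairs E (flipped ps i)) \<in> {0, 2} \<and>
        card (sdiff (cut_pairs E (\<Union>M)) (cut_pairs E (flipped ps i))) \<in> {0, 2}))"

lemma two_cut_route_spec:
  assumes "pair_partition D M" "D \<subseteq> J" "card (cut_pairs E D) = 2"
  shows "distinct (two_cut_route M) \<and> set (two_cut_route M) \<subseteq> M \<and>
    cut_pairs E (\<Union>(set (two_cut_route M))) = cut_pairs E D \<and>
    (\<forall>i\<le>length (two_cut_route M). card (cut_pairs E (flipped (two_cut_route M) i)) \<in> {0, 2} \<and>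
       card (sdiff (cut_pairs E D) (cut_pairs E (flipped (two_cut_route M) i))) \<in> {0, 2})"
proof -
  have "\<Union>M = D"
    by (rule pair_partition_Union[OF assms(1)])
  then show ?thesis
    unfolding two_cut_route_def by (rule ssubst) (rule someI_ex, rule exists_two_cut_route[OF assms])
qed

end

section \<open>Even-windable weights and canonical paths\<close>

lemma square_telescope_le:
  fixes a :: "nat \<Rightarrow> real"
  shows "(a 0 - a L)\<^sup>2 \<le> real L * (\<Sum>i<L. (a i - a (Suc i))\<^sup>2)"
proof -
  have "(a 0 - a L)\<^sup>2 = (\<Sum>i<L. 1 * (a i - a (Suc i)))\<^sup>2"
    by (simp add: sum_lessThan_telescope')
  also have "\<dots> \<le> (\<Sum>i<L. 1\<^sup>2) * (\<Sum>i<L. (a i - a (Suc i))\<^sup>2)"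
    by (rule Cauchy_Schwarz_ineq_sum)
  finally show ?thesis
    by simp
qed

locale even_winding = paired_set J E for J :: "'a set" and E +
  fixes F :: "'a set \<Rightarrow> rat" and B :: "'a set \<Rightarrow> 'a set \<Rightarrow> 'a set set \<Rightarrow> rat"
  assumes F_nonneg: "x \<subseteq> J \<Longrightarrow> 0 \<le> F x"
    and B_nonneg: "x \<subseteq> J \<Longrightarrow> y \<subseteq> J \<Longrightarrow> M \<in> Match (sdiff x y) \<Longrightarrow> 0 \<le> B x y M"
    and F_mult_eq_sum_B: "x \<subseteq> J \<Longrightarrow> y \<subseteq> J \<Longrightarrow> F x * F y = (\<Sum>M\<in>Match (sdiff x y). B x y M)"
    and B_flip: "x \<subseteq> J \<Longrightarrow> y \<subseteq> J \<Longrightarrow> M \<in> Match (sdiff x y) \<Longrightarrow> S \<in> M \<Longrightarrow>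
                   B x y M = B (sdiff x S) (sdiff y S) M"
begin

abbreviation \<Omega> :: "'a set set" where "\<Omega> \<equiv> Omega J E F"
abbreviation \<Omega>\<^sub>0 :: "'a set set" where "\<Omega>\<^sub>0 \<equiv> Omega_k J E F 0"
abbreviation \<Omega>\<^sub>2 :: "'a set set" where "\<Omega>\<^sub>2 \<equiv> Omega_k J E F 2"

definition Fr :: "'a set \<Rightarrow> real" where
  "Fr x = real_of_rat (F x)"

definition Br :: "'a set \<Rightarrow> 'a set \<Rightarrow> 'a set set \<Rightarrow> real" where
  "Br x y M = real_of_rat (B x y M)"

definition Z :: real where
  "Z = (\<Sum>x\<in>\<Omega>. Fr x)"

definition Z\<^sub>0 :: real where
  "Z\<^sub>0 = (\<Sum>x\<in>\<Omega>\<^sub>0. Fr x)"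

definition Z\<^sub>2 :: real where
  "Z\<^sub>2 = (\<Sum>x\<in>\<Omega>\<^sub>2. Fr x)"

lemma mem_Omega_k: "x \<in> Omega_k J E F k \<longleftrightarrow> x \<subseteq> J \<and> card (cut_pairs E x) = k \<and> 0 < F x"
  by (auto simp: Omega_k_def is_k_assignment_iff)

lemma mem_Omega0: "x \<in> \<Omega>\<^sub>0 \<longleftrightarrow> x \<subseteq> J \<and> cut_pairs E x = {} \<and> 0 < F x"
  using finite_cut_pairs[of x] by (auto simp: mem_Omega_k)

lemma mem_Omega: "x \<in> \<Omega> \<longleftrightarrow> x \<subseteq> J \<and> card (cut_pairs E x) \<in> {0, 2} \<and> 0 < F x"
  by (auto simp: Omega_def mem_Omega_k)

lemma Omega_eq_Un: "\<Omega> = \<Omega>\<^sub>0 \<union> \<Omega>\<^sub>2"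
  by (simp add: Omega_def)

lemma Omega0_Int_Omega2: "\<Omega>\<^sub>0 \<inter> \<Omega>\<^sub>2 = {}"
  by (auto simp: mem_Omega_k)

lemma Omega_subset_Pow: "\<Omega> \<subseteq> Pow J"
  by (auto simp: mem_Omega)

lemma Omega0_subset_Pow: "\<Omega>\<^sub>0 \<subseteq> Pow J" and Omega2_subset_Pow: "\<Omega>\<^sub>2 \<subseteq> Pow J"
  using Omega_subset_Pow Omega_eq_Un by auto

lemma finite_Omega: "finite \<Omega>" and finite_Omega0: "finite \<Omega>\<^sub>0" and finite_Omega2: "finite \<Omega>\<^sub>2"
  using finite_subset[OF Omega_subset_Pow] finite_J Omega_eq_Un by auto

lemma Fr_pos: "x \<in> \<Omega> \<Longrightarrow> 0 < Fr x"
  by (simp add: Fr_def mem_Omega)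

lemma Br_nonneg: "x \<subseteq> J \<Longrightarrow> y \<subseteq> J \<Longrightarrow> M \<in> Match (sdiff x y) \<Longrightarrow> 0 \<le> Br x y M"
  by (simp add: Br_def B_nonneg)

lemma finite_Match_sdiff: "x \<subseteq> J \<Longrightarrow> y \<subseteq> J \<Longrightarrow> finite (Match (sdiff x y))"
  by (meson finite_J finite_Match finite_subset sdiff_subset)

lemma Fr_mult_eq_sum_Br: "x \<subseteq> J \<Longrightarrow> y \<subseteq> J \<Longrightarrow> Fr x * Fr y = (\<Sum>M\<in>Match (sdiff x y). Br x y M)"
  by (simp add: Fr_def Br_def F_mult_eq_sum_B flip: of_rat_mult of_rat_sum)

lemma B_le_F_mult:
  assumes "x \<subseteq> J" "y \<subseteq> J" "M \<in> Match (sdiff x y)"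
  shows "B x y M \<le> F x * F y"
  unfolding F_mult_eq_sum_B[OF assms(1,2)]
  using assms B_nonneg by (intro member_le_sum finite_Match_sdiff) auto

lemma B_flip_Union:
  assumes "x \<subseteq> J" "y \<subseteq> J" "M \<in> Match (sdiff x y)" "N \<subseteq> M"
  shows "B x y M = B (sdiff x (\<Union>N)) (sdiff y (\<Union>N)) M \<and>
         sdiff x (\<Union>N) \<subseteq> J \<and> sdiff y (\<Union>N) \<subseteq> J"
proof -
  have M: "pair_partition (sdiff x y) M"
    using assms(3) by (simp add: Match_iff)
  have "finite M"
    using finite_pair_partition[OF M] finite_subset[OF sdiff_subset[OF assms(1,2)] finite_J] by blast
  then have "finite N"
    using assms(4) finite_subset by blast
  from this assms(4) show ?thesis
  proof (induction N rule: finite_induct)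
    case empty
    then show ?case
      using assms(1,2) by simp
  next
    case (insert S N)
    have IH: "B x y M = B (sdiff x (\<Union>N)) (sdiff y (\<Union>N)) M"
      "sdiff x (\<Union>N) \<subseteq> J" "sdiff y (\<Union>N) \<subseteq> J"
      using insert by auto
    have S: "S \<in> M" "S \<inter> \<Union>N = {}"
      using insert pair_partition_disjoint_Union[OF M, of S N] by auto
    have "S \<subseteq> J"
      using pair_partition_subset[OF M S(1)] sdiff_subset[OF assms(1,2)] by blast
    have eq: "sdiff z (\<Union>(insert S N)) = sdiff (sdiff z (\<Union>N)) S" for z
      using S(2) sdiff_Un_disjoint[of "\<Union>N" S z] by (simp add: Int_commute Un_commute)
    have "B (sdiff x (\<Union>N)) (sdiff y (\<Union>N)) M =
          B (sdiff (sdiff x (\<Union>N)) S) (sdiff (sdiff y (\<Union>N)) S) M"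
      using B_flip[OF IH(2,3) _ S(1)] assms(3) by simp
    moreover have "sdiff (sdiff x (\<Union>N)) S \<subseteq> J" "sdiff (sdiff y (\<Union>N)) S \<subseteq> J"
      using IH(2,3) \<open>S \<subseteq> J\<close> by (simp_all add: sdiff_subset)
    ultimately show ?case
      unfolding eq using IH(1) by simp
  qed
qed

lemma flipped_F_pos:
  assumes "x \<subseteq> J" "y \<subseteq> J" "M \<in> Match (sdiff x y)" "0 < B x y M" "N \<subseteq> M"
  shows "0 < F (sdiff x (\<Union>N)) \<and> 0 < F (sdiff y (\<Union>N))"
proof -
  define x' y' where "x' = sdiff x (\<Union>N)" and "y' = sdiff y (\<Union>N)"
  have x'y': "B x y M = B x' y' M" "x' \<subseteq> J" "y' \<subseteq> J"
    using B_flip_Union[OF assms(1,2,3,5)] unfolding x'_def y'_def by auto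
  have "0 < F x' * F y'"
    using B_le_F_mult[OF x'y'(2,3)] assms(3,4) x'y'(1) unfolding x'_def y'_def by fastforce
  then show ?thesis
    using F_nonneg[OF x'y'(2)] F_nonneg[OF x'y'(3)] unfolding x'_def y'_def
    by (simp add: zero_less_mult_iff)
qed

definition windings :: "'a set set \<Rightarrow> 'a set set \<Rightarrow> ('a set \<times> 'a set \<times> 'a set set) set" where
  "windings X Y = {(x, y, M). x \<in> X \<and> y \<in> Y \<and> M \<in> Match (sdiff x y) \<and> 0 < B x y M}"

lemma windings_subset_Sigma:
  "windings X Y \<subseteq> Sigma X (\<lambda>x. Sigma Y (\<lambda>y. Match (sdiff x y)))"
  by (auto simp: windings_def)

lemma finite_Sigma_Match:
  assumes "X \<subseteq> Pow J" "Y \<subseteq> Pow J"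
  shows "finite (Sigma X (\<lambda>x. Sigma Y (\<lambda>y. Match (sdiff x y))))"
proof (intro finite_SigmaI)
  show "finite X" "finite Y"
    using finite_subset[OF assms(1)] finite_subset[OF assms(2)] finite_J by simp_all
  show "finite (Match (sdiff x y))" if "x \<in> X" "y \<in> Y" for x y
    using assms(1,2) that by (meson PowD finite_Match_sdiff subsetD)
qed

lemma finite_windings: "X \<subseteq> Pow J \<Longrightarrow> Y \<subseteq> Pow J \<Longrightarrow> finite (windings X Y)"
  by (rule finite_subset[OF windings_subset_Sigma finite_Sigma_Match])

lemma sum_Sigma_Match:
  assumes "X \<subseteq> Pow J" "Y \<subseteq> Pow J"
  shows "(\<Sum>(x, y, M)\<in>Sigma X (\<lambda>x. Sigma Y (\<lambda>y. Match (sdiff x y))). g x y M) =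
         (\<Sum>x\<in>X. \<Sum>y\<in>Y. \<Sum>M\<in>Match (sdiff x y). g x y M)"
proof -
  have fin: "finite X" "finite Y"
    using finite_subset[OF assms(1)] finite_subset[OF assms(2)] finite_J by simp_all
  have finM: "finite (Match (sdiff x y))" if "x \<in> X" "y \<in> Y" for x y
    using assms(1,2) that by (meson PowD finite_Match_sdiff subsetD)
  have "(\<Sum>(x, y, M)\<in>Sigma X (\<lambda>x. Sigma Y (\<lambda>y. Match (sdiff x y))). g x y M) =
        (\<Sum>x\<in>X. \<Sum>(y, M)\<in>Sigma Y (\<lambda>y. Match (sdiff x y)). g x y M)"
    using fin finM by (subst sum.Sigma) (auto simp: split_def)
  also have "\<dots> = (\<Sum>x\<in>X. \<Sum>y\<in>Y. \<Sum>M\<in>Match (sdiff x y). g x y M)"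
    using fin finM by (intro sum.cong refl) (simp add: sum.Sigma split_def)
  finally show ?thesis .
qed

lemma sum_windings:
  assumes "X \<subseteq> Pow J" "Y \<subseteq> Pow J"
  shows "(\<Sum>(x, y, M)\<in>windings X Y. Br x y M * g x y) = (\<Sum>x\<in>X. \<Sum>y\<in>Y. Fr x * Fr y * g x y)"
proof -
  let ?A = "Sigma X (\<lambda>x. Sigma Y (\<lambda>y. Match (sdiff x y)))"
  have "Br x y M = 0" if "(x, y, M) \<in> ?A - windings X Y" for x y M
  proof -
    have "x \<subseteq> J" "y \<subseteq> J" "M \<in> Match (sdiff x y)" "\<not> 0 < B x y M"
      using that assms by (auto simp: windings_def)
    then show ?thesis
      using B_nonneg[of x y M] by (simp add: Br_def)
  qed
  then have "(\<Sum>(x, y, M)\<in>windings X Y. Br x y M * g x y) = (\<Sum>(x, y, M)\<in>?A. Br x y M * g x y)"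
    by (intro sum.mono_neutral_left[OF finite_Sigma_Match[OF assms] windings_subset_Sigma]) auto
  also have "\<dots> = (\<Sum>x\<in>X. \<Sum>y\<in>Y. \<Sum>M\<in>Match (sdiff x y). Br x y M * g x y)"
    by (rule sum_Sigma_Match[OF assms])
  also have "\<dots> = (\<Sum>x\<in>X. \<Sum>y\<in>Y. Fr x * Fr y * g x y)"
  proof (intro sum.cong refl)
    fix x y assume "x \<in> X" "y \<in> Y"
    then have "x \<subseteq> J" "y \<subseteq> J"
      using assms by auto
    then show "(\<Sum>M\<in>Match (sdiff x y). Br x y M * g x y) = Fr x * Fr y * g x y"
      by (simp add: Fr_mult_eq_sum_Br sum_distrib_right)
  qed
  finally show ?thesis .
qed

definition energy :: "('a set \<Rightarrow> real) \<Rightarrow> real" where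
  "energy h = (\<Sum>z\<in>\<Omega>. \<Sum>z'\<in>\<Omega>. if hdist z z' = 2 then min (Fr z) (Fr z') * (h z - h z')\<^sup>2 else 0)"

lemma min_Fr_nonneg: "z \<in> \<Omega> \<Longrightarrow> z' \<in> \<Omega> \<Longrightarrow> 0 \<le> min (Fr z) (Fr z')"
  using Fr_pos[of z] Fr_pos[of z'] by simp

lemma energy_nonneg: "0 \<le> energy h"
  unfolding energy_def by (intro sum_nonneg) (auto intro!: mult_nonneg_nonneg min_Fr_nonneg)

definition edges :: "('a set \<times> 'a set) set" where
  "edges = {(z, S). z \<in> \<Omega> \<and> sdiff z S \<in> \<Omega> \<and> card S = 2}"

definition transit :: "'a set \<Rightarrow> 'a set \<Rightarrow> ('a set \<times> 'a set set) set" where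
  "transit z S = {(w, M). w \<in> \<Omega> \<and> sdiff w S \<in> \<Omega> \<and> M \<in> Match (sdiff z w) \<and> S \<in> M}"

lemma finite_edges: "finite edges"
proof -
  have "edges \<subseteq> \<Omega> \<times> Pow J"
    using Omega_subset_Pow by (auto simp: edges_def) (metis PowD sdiff_sdiff_left sdiff_subset subsetD)
  then show ?thesis
    using finite_Omega finite_J finite_subset by blast
qed

lemma edges_energy_le:
  "(\<Sum>(z, S)\<in>edges. min (Fr z) (Fr (sdiff z S)) * (h z - h (sdiff z S))\<^sup>2) \<le> energy h"
proof -
  define g where "g = (\<lambda>(z, z'). if hdist z z' = 2 then min (Fr z) (Fr z') * (h z - h z')\<^sup>2 else 0)"
  define other_end where "other_end = (\<lambda>(z :: 'a set, S). (z, sdiff z S))"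
  have "inj_on other_end edges"
    by (rule inj_onI) (auto simp: other_end_def)
  have "(\<Sum>(z, S)\<in>edges. min (Fr z) (Fr (sdiff z S)) * (h z - h (sdiff z S))\<^sup>2) = sum (g \<circ> other_end) edges"
    by (intro sum.cong refl) (auto simp: edges_def g_def other_end_def)
  also have "\<dots> = sum g (other_end ` edges)"
    by (simp add: sum.reindex[OF \<open>inj_on other_end edges\<close>])
  also have "\<dots> \<le> sum g (\<Omega> \<times> \<Omega>)"
    using finite_Omega
    by (intro sum_mono2) (auto simp: edges_def other_end_def g_def intro!: mult_nonneg_nonneg min_Fr_nonneg)
  also have "\<dots> = energy h"
    by (simp add: energy_def g_def sum.cartesian_product)
  finally show ?thesis .
qed

lemma sum_Br_le_Fr_mult_Z:
  assumes "z \<subseteq> J" "X \<subseteq> Sigma \<Omega> (\<lambda>w. Match (sdiff z w))"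
  shows "(\<Sum>(w, M)\<in>X. Br z w M) \<le> Fr z * Z"
proof -
  have fin: "finite (Sigma \<Omega> (\<lambda>w. Match (sdiff z w)))"
    using assms(1) Omega_subset_Pow finite_Omega by (intro finite_SigmaI finite_Match_sdiff) auto
  have "(\<Sum>(w, M)\<in>X. Br z w M) \<le> (\<Sum>(w, M)\<in>Sigma \<Omega> (\<lambda>w. Match (sdiff z w)). Br z w M)"
    using assms Omega_subset_Pow by (intro sum_mono2[OF fin]) (auto intro!: Br_nonneg)
  also have "\<dots> = (\<Sum>w\<in>\<Omega>. \<Sum>M\<in>Match (sdiff z w). Br z w M)"
    using assms(1) Omega_subset_Pow finite_Omega
    by (subst sum.Sigma) (auto simp: finite_Match_sdiff split_def)
  also have "\<dots> = (\<Sum>w\<in>\<Omega>. Fr z * Fr w)"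
    using assms(1) Omega_subset_Pow by (intro sum.cong refl) (auto simp: Fr_mult_eq_sum_Br)
  also have "\<dots> = Fr z * Z"
    by (simp add: Z_def sum_distrib_left)
  finally show ?thesis .
qed

text \<open>The weight carried through an edge is bounded from both of its ends, since flipping
  the edge's pair in both arguments of \<open>B\<close> preserves it.\<close>
lemma transit_weight_le:
  assumes "z \<in> \<Omega>" "sdiff z S \<in> \<Omega>"
  shows "(\<Sum>(w, M)\<in>transit z S. Br z w M) \<le> min (Fr z) (Fr (sdiff z S)) * Z"
proof -
  define z' where "z' = sdiff z S"
  have J: "z \<subseteq> J" "z' \<subseteq> J"
    using assms Omega_subset_Pow unfolding z'_def by auto
  have "(\<Sum>(w, M)\<in>transit z S. Br z w M) \<le> Fr z * Z"
    using J(1) by (rule sum_Br_le_Fr_mult_Z) (auto simp: transit_def)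
  moreover have "(\<Sum>(w, M)\<in>transit z S. Br z w M) \<le> Fr z' * Z"
  proof -
    define flip where "flip = (\<lambda>(w :: 'a set, M :: 'a set set). (sdiff w S, M))"
    have "inj_on flip (transit z S)"
      by (rule inj_onI) (auto simp: flip_def)
    have "(\<Sum>(w, M)\<in>transit z S. Br z w M) = (\<Sum>(w, M)\<in>transit z S. Br z' (sdiff w S) M)"
      using J(1) Omega_subset_Pow
      by (intro sum.cong refl) (auto simp: transit_def Br_def z'_def intro!: arg_cong[of _ _ real_of_rat] B_flip)
    also have "\<dots> = (\<Sum>(w, M)\<in>flip ` transit z S. Br z' w M)"
      using sum.reindex[OF \<open>inj_on flip (transit z S)\<close>, of "\<lambda>(w, M). Br z' w M"]
      by (simp add: flip_def case_prod_beta)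
    also have "\<dots> \<le> Fr z' * Z"
      using J(2) by (rule sum_Br_le_Fr_mult_Z) (auto simp: transit_def flip_def z'_def)
    finally show ?thesis .
  qed
  ultimately show ?thesis
    unfolding z'_def by (simp add: min_def)
qed

lemma transit_sum_le:
  assumes "X \<subseteq> Sigma edges (\<lambda>(z, S). transit z S)"
  shows "(\<Sum>((z, S), (w, M))\<in>X. Br z w M * (h z - h (sdiff z S))\<^sup>2) \<le> Z * energy h"
proof -
  let ?G = "\<lambda>((z, S), (w, M)). Br z w M * (h z - h (sdiff z S))\<^sup>2"
  have fin_transit: "finite (transit z S)" if "z \<in> \<Omega>" for z S
  proof (rule finite_subset)
    show "transit z S \<subseteq> Sigma \<Omega> (\<lambda>w. Match (sdiff z w))"
      by (auto simp: transit_def)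
    show "finite (Sigma \<Omega> (\<lambda>w. Match (sdiff z w)))"
      using that Omega_subset_Pow finite_Omega by (intro finite_SigmaI finite_Match_sdiff) auto
  qed
  have fin: "finite (Sigma edges (\<lambda>(z, S). transit z S))"
    using finite_edges fin_transit by (intro finite_SigmaI) (auto simp: edges_def)
  have "sum ?G X \<le> sum ?G (Sigma edges (\<lambda>(z, S). transit z S))"
    using assms Omega_subset_Pow
    by (intro sum_mono2[OF fin]) (auto simp: edges_def transit_def intro!: mult_nonneg_nonneg Br_nonneg)
  also have "\<dots> = (\<Sum>(z, S)\<in>edges. (h z - h (sdiff z S))\<^sup>2 * (\<Sum>(w, M)\<in>transit z S. Br z w M))"
    using finite_edges fin_transit
    by (subst sum.Sigma[symmetric]) (auto simp: edges_def sum_distrib_left split_def mult.commute)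
  also have "\<dots> \<le> (\<Sum>(z, S)\<in>edges. (h z - h (sdiff z S))\<^sup>2 * (min (Fr z) (Fr (sdiff z S)) * Z))"
    by (intro sum_mono) (auto simp: edges_def intro!: mult_left_mono transit_weight_le)
  also have "\<dots> = Z * (\<Sum>(z, S)\<in>edges. min (Fr z) (Fr (sdiff z S)) * (h z - h (sdiff z S))\<^sup>2)"
    by (simp add: sum_distrib_left split_def mult_ac)
  also have "\<dots> \<le> Z * energy h"
    using Fr_pos by (intro mult_left_mono edges_energy_le) (auto simp: Z_def intro: sum_nonneg less_imp_le)
  finally show ?thesis .
qed

lemma route_square_le:
  assumes xy: "x \<subseteq> J" "y \<subseteq> J" and M: "M \<in> Match (sdiff x y)"
    and ps: "distinct ps" "set ps \<subseteq> M"
  shows "Br x y M * (h x - h (sdiff x (\<Union>(set ps))))\<^sup>2 \<le> real (card J) / 2 *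
    (\<Sum>i<length ps. Br (sdiff x (flipped ps i)) (sdiff y (flipped ps i)) M *
       (h (sdiff x (flipped ps i)) - h (sdiff (sdiff x (flipped ps i)) (ps ! i)))\<^sup>2)"
proof -
  define z where "z i = sdiff x (flipped ps i)" for i
  have D: "pair_partition (sdiff x y) M" "sdiff x y \<subseteq> J"
    using M xy by (simp_all add: Match_iff sdiff_subset)
  have Br_z: "Br (z i) (sdiff y (flipped ps i)) M = Br x y M" for i
    using B_flip_Union[OF xy M, of "set (take i ps)"] ps(2) set_take_subset[of i ps]
    unfolding z_def flipped_def Br_def by simp
  have z_Suc: "z (Suc i) = sdiff (z i) (ps ! i)" if "i < length ps" for i
    unfolding z_def by (rule sdiff_flipped_Suc[OF D(1) ps that])
  have "2 * length ps \<le> card (sdiff x y)"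
    using length_le_card_pair_partition[OF D(1) _ ps] D(2) finite_J finite_subset by blast
  also have "\<dots> \<le> card J"
    using D(2) finite_J by (rule card_mono[rotated])
  finally have len: "real (length ps) \<le> real (card J) / 2"
    by simp
  have "(h x - h (sdiff x (\<Union>(set ps))))\<^sup>2 \<le> real (length ps) * (\<Sum>i<length ps. (h (z i) - h (z (Suc i)))\<^sup>2)"
    using square_telescope_le[of "\<lambda>i. h (z i)" "length ps"] by (simp add: z_def flipped_length)
  also have "\<dots> \<le> real (card J) / 2 * (\<Sum>i<length ps. (h (z i) - h (z (Suc i)))\<^sup>2)"
    using len by (intro mult_right_mono sum_nonneg) auto
  finally have "Br x y M * (h x - h (sdiff x (\<Union>(set ps))))\<^sup>2 \<le>
      Br x y M * (real (card J) / 2 * (\<Sum>i<length ps. (h (z i) - h (z (Suc i)))\<^sup>2))"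
    using Br_nonneg[OF xy M] by (rule mult_left_mono)
  also have "\<dots> = real (card J) / 2 * (\<Sum>i<length ps. Br (z i) (sdiff y (flipped ps i)) M *
       (h (z i) - h (sdiff (z i) (ps ! i)))\<^sup>2)"
    by (simp add: Br_z z_Suc sum_distrib_left mult_ac)
  finally show ?thesis
    unfolding z_def .
qed

definition admissible_route :: "'a set \<Rightarrow> 'a set \<Rightarrow> 'a set set \<Rightarrow> 'a set list \<Rightarrow> bool" where
  "admissible_route x y M ps \<longleftrightarrow> distinct ps \<and> set ps \<subseteq> M \<and>
     (\<forall>i\<le>length ps. sdiff x (flipped ps i) \<in> \<Omega> \<and> sdiff y (flipped ps i) \<in> \<Omega>)"

definition route_step :: "('a set set \<Rightarrow> 'a set list) \<Rightarrow> ('a set \<times> 'a set \<times> 'a set set) \<times> nat \<Rightarrow>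
    ('a set \<times> 'a set) \<times> ('a set \<times> 'a set set)" where
  "route_step route = (\<lambda>((x, y, M), i).
     ((sdiff x (flipped (route M) i), route M ! i), (sdiff y (flipped (route M) i), M)))"

lemma inj_on_route_step:
  assumes "\<And>x y M. (x, y, M) \<in> T \<Longrightarrow> distinct (route M)"
  shows "inj_on (route_step route) (Sigma T (\<lambda>(x, y, M). {..<length (route M)}))"
proof (rule inj_onI)
  fix p q
  assume "p \<in> Sigma T (\<lambda>(x, y, M). {..<length (route M)})" "q \<in> Sigma T (\<lambda>(x, y, M). {..<length (route M)})"
    and "route_step route p = route_step route q"
  moreover obtain x y M i x' y' M' i' where "p = ((x, y, M), i)" "q = ((x', y', M'), i')"
    by (metis prod.exhaust)
  ultimately have "(x, y, M) \<in> T" "i < length (route M)" "i' < length (route M)" "M' = M"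
    "route M ! i = route M ! i'" "sdiff x (flipped (route M) i) = sdiff x' (flipped (route M) i')"
    "sdiff y (flipped (route M) i) = sdiff y' (flipped (route M) i')"
    by (auto simp: route_step_def)
  moreover from this have "i = i'"
    using assms nth_eq_iff_index_eq by blast
  ultimately show "p = q"
    using \<open>p = _\<close> \<open>q = _\<close> by simp
qed

lemma route_step_mem_transit:
  assumes "(x, y, M) \<in> windings \<Omega> \<Omega>" "admissible_route x y M (route M)" "i < length (route M)"
  shows "route_step route ((x, y, M), i) \<in> Sigma edges (\<lambda>(z, S). transit z S)"
proof -
  let ?S = "route M ! i"
  have D: "pair_partition (sdiff x y) M"
    using assms(1) by (simp add: windings_def Match_iff)
  have S: "?S \<in> M"
    using assms(2,3) by (auto simp: admissible_route_def)
  have "sdiff x (flipped (route M) (Suc i)) = sdiff (sdiff x (flipped (route M) i)) ?S"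
       "sdiff y (flipped (route M) (Suc i)) = sdiff (sdiff y (flipped (route M) i)) ?S"
    using sdiff_flipped_Suc[OF D _ _ assms(3)] assms(2) by (auto simp: admissible_route_def)
  moreover have "\<forall>j\<le>Suc i. sdiff x (flipped (route M) j) \<in> \<Omega> \<and> sdiff y (flipped (route M) j) \<in> \<Omega>"
    using assms(2,3) by (auto simp: admissible_route_def)
  ultimately show ?thesis
    using pair_partition_card[OF D S] S assms(1)
    by (auto simp: route_step_def edges_def transit_def windings_def)
qed

text \<open>The canonical-path bound: a route is cut into steps along edges of the chain, and the
  steps through one edge carry at most the weight bounded in \<open>transit_weight_le\<close>.\<close>
lemma congestion:
  assumes T: "T \<subseteq> windings \<Omega> \<Omega>"
    and route: "\<And>x y M. (x, y, M) \<in> T \<Longrightarrow> admissible_route x y M (route M)"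
  shows "(\<Sum>(x, y, M)\<in>T. Br x y M * (h x - h (sdiff x (\<Union>(set (route M)))))\<^sup>2)
           \<le> real (card J) / 2 * Z * energy h"
proof -
  define steps where "steps = Sigma T (\<lambda>(x, y, M). {..<length (route M)})"
  define G where "G = (\<lambda>((z, S), (w, M)). Br z w M * (h z - h (sdiff z S))\<^sup>2)"
  have T_mem: "x \<subseteq> J" "y \<subseteq> J" "M \<in> Match (sdiff x y)" if "(x, y, M) \<in> T" for x y M
    using that T Omega_subset_Pow by (auto simp: windings_def)
  have "finite T"
    using finite_windings[OF Omega_subset_Pow Omega_subset_Pow] T by (rule finite_subset[rotated])
  have "(\<Sum>(x, y, M)\<in>T. Br x y M * (h x - h (sdiff x (\<Union>(set (route M)))))\<^sup>2)
      \<le> (\<Sum>(x, y, M)\<in>T. real (card J) / 2 * (\<Sum>i<length (route M). G (route_step route ((x, y, M), i))))"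
    using route_square_le[OF T_mem] route
    by (intro sum_mono) (auto simp: G_def route_step_def admissible_route_def)
  also have "\<dots> = real (card J) / 2 * sum (G \<circ> route_step route) steps"
    using \<open>finite T\<close> by (simp add: steps_def sum.Sigma sum_distrib_left split_def)
  also have "\<dots> = real (card J) / 2 * sum G (route_step route ` steps)"
    using inj_on_route_step[of T route] route unfolding steps_def
    by (simp add: sum.reindex admissible_route_def)
  also have "\<dots> \<le> real (card J) / 2 * (Z * energy h)"
  proof (intro mult_left_mono)
    have "route_step route ` steps \<subseteq> Sigma edges (\<lambda>(z, S). transit z S)"
      using route_step_mem_transit route T unfolding steps_def by blast
    then show "sum G (route_step route ` steps) \<le> Z * energy h"
      unfolding G_def by (rule transit_sum_le)
  qed simp
  finally show ?thesis
    by (simp add: mult_ac)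
qed

end

section \<open>The Poincare inequality\<close>

lemma sum_pair_squares_eq:
  fixes w u :: "'b \<Rightarrow> real"
  shows "(\<Sum>x\<in>A. \<Sum>y\<in>A. w x * w y * (u x - u y)\<^sup>2)
           = 2 * (\<Sum>x\<in>A. w x) * (\<Sum>x\<in>A. w x * (u x)\<^sup>2) - 2 * (\<Sum>x\<in>A. w x * u x)\<^sup>2"
proof -
  have "(\<Sum>x\<in>A. \<Sum>y\<in>A. w x * w y * (u x - u y)\<^sup>2)
      = (\<Sum>x\<in>A. \<Sum>y\<in>A. (w x * (u x)\<^sup>2) * w y + w x * (w y * (u y)\<^sup>2) - 2 * ((w x * u x) * (w y * u y)))"
    by (intro sum.cong refl) (simp add: power2_diff algebra_simps)
  also have "\<dots> = (\<Sum>x\<in>A. \<Sum>y\<in>A. (w x * (u x)\<^sup>2) * w y) + (\<Sum>x\<in>A. \<Sum>y\<in>A. w x * (w y * (u y)\<^sup>2))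
                   - 2 * (\<Sum>x\<in>A. \<Sum>y\<in>A. (w x * u x) * (w y * u y))"
    by (simp add: sum.distrib sum_subtractf sum_distrib_left)
  also have "\<dots> = (\<Sum>x\<in>A. w x * (u x)\<^sup>2) * (\<Sum>y\<in>A. w y) + (\<Sum>x\<in>A. w x) * (\<Sum>y\<in>A. w y * (u y)\<^sup>2)
                   - 2 * ((\<Sum>x\<in>A. w x * u x) * (\<Sum>y\<in>A. w y * u y))"
    by (simp only: sum_product)
  finally show ?thesis
    by (simp add: power2_eq_square algebra_simps)
qed

lemma square_add_le: "((u :: real) + v)\<^sup>2 \<le> 3 / 2 * u\<^sup>2 + 3 * v\<^sup>2"
proof -
  have "0 \<le> (u - 2 * v)\<^sup>2"
    by simp
  then show ?thesis
    by (simp add: power2_eq_square algebra_simps)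
qed

lemma inj_on_flip_triples: "inj_on (\<lambda>(x, y, M). (sdiff x (U M), sdiff y (U M), M)) A"
  by (rule inj_onI) auto

context even_winding
begin

lemma windings_mono: "X \<subseteq> X' \<Longrightarrow> Y \<subseteq> Y' \<Longrightarrow> windings X Y \<subseteq> windings X' Y'"
  by (auto simp: windings_def)

lemma windings_memD:
  assumes "(x, y, M) \<in> windings X Y" "X \<subseteq> Pow J" "Y \<subseteq> Pow J"
  shows "x \<in> X" "y \<in> Y" "x \<subseteq> J" "y \<subseteq> J" "M \<in> Match (sdiff x y)" "0 < B x y M"
  using assms by (auto simp: windings_def)

lemma flipped_in_Omega:
  assumes "x \<subseteq> J" "y \<subseteq> J" "M \<in> Match (sdiff x y)" "0 < B x y M" "N \<subseteq> M"
    and "card (cut_pairs E (sdiff x (\<Union>N))) \<in> {0, 2}" "card (cut_pairs E (sdiff y (\<Union>N))) \<in> {0, 2}"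
  shows "sdiff x (\<Union>N) \<in> \<Omega> \<and> sdiff y (\<Union>N) \<in> \<Omega>"
  using flipped_F_pos[OF assms(1-5)] B_flip_Union[OF assms(1,2,3,5)] assms(6,7) by (simp add: mem_Omega)

lemma cut_free_route_admissible:
  assumes t: "(x, y, M) \<in> windings \<Omega>\<^sub>0 \<Omega>\<^sub>0"
  shows "admissible_route x y M (cut_free_route M) \<and> \<Union>(set (cut_free_route M)) = sdiff x y"
proof -
  note t = windings_memD[OF t Omega0_subset_Pow Omega0_subset_Pow]
  have cut: "cut_pairs E x = {}" "cut_pairs E y = {}"
    using t(1,2) by (simp_all add: mem_Omega0)
  have D: "pair_partition (sdiff x y) M" "sdiff x y \<subseteq> J"
    using t(3-5) by (simp_all add: Match_iff sdiff_subset)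
  have "cut_pairs E (sdiff x y) = {}"
    using cut by (simp add: cut_pairs_sdiff)
  note route = cut_free_route_spec[OF D this]
  have "sdiff x (flipped (cut_free_route M) i) \<in> \<Omega> \<and> sdiff y (flipped (cut_free_route M) i) \<in> \<Omega>"
    if "i \<le> length (cut_free_route M)" for i
  proof -
    have "set (take i (cut_free_route M)) \<subseteq> M"
      using route set_take_subset[of i "cut_free_route M"] by simp
    moreover have "card (cut_pairs E (flipped (cut_free_route M) i)) \<in> {0, 2}"
      using route that by blast
    ultimately show ?thesis
      using flipped_in_Omega[OF t(3-6)] cut unfolding flipped_def by (simp add: cut_pairs_sdiff)
  qed
  then show ?thesis
    using route pair_partition_Union[OF D(1)] by (auto simp: admissible_route_def)
qed

lemma Omega0_variance_le:
  "(\<Sum>x\<in>\<Omega>\<^sub>0. \<Sum>y\<in>\<Omega>\<^sub>0. Fr x * Fr y * (h x - h y)\<^sup>2) \<le> real (card J) / 2 * Z * energy h"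
proof -
  have "(\<Sum>x\<in>\<Omega>\<^sub>0. \<Sum>y\<in>\<Omega>\<^sub>0. Fr x * Fr y * (h x - h y)\<^sup>2) =
        (\<Sum>(x, y, M)\<in>windings \<Omega>\<^sub>0 \<Omega>\<^sub>0. Br x y M * (h x - h y)\<^sup>2)"
    by (rule sum_windings[OF Omega0_subset_Pow Omega0_subset_Pow, symmetric])
  also have "\<dots> = (\<Sum>(x, y, M)\<in>windings \<Omega>\<^sub>0 \<Omega>\<^sub>0.
                     Br x y M * (h x - h (sdiff x (\<Union>(set (cut_free_route M)))))\<^sup>2)"
    using cut_free_route_admissible by (intro sum.cong refl) auto
  also have "\<dots> \<le> real (card J) / 2 * Z * energy h"
    using cut_free_route_admissible Omega_eq_Un by (intro congestion windings_mono) auto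
  finally show ?thesis .
qed

lemma two_cut_route_admissible:
  assumes t: "(a, x, M) \<in> windings \<Omega>\<^sub>2 \<Omega>\<^sub>0"
  shows "admissible_route a x M (two_cut_route M) \<and>
    sdiff a (\<Union>(set (two_cut_route M))) \<in> \<Omega>\<^sub>0 \<and> sdiff x (\<Union>(set (two_cut_route M))) \<in> \<Omega>\<^sub>2"
proof -
  note t = windings_memD[OF t Omega2_subset_Pow Omega0_subset_Pow]
  define ps where "ps = two_cut_route M"
  have cut: "card (cut_pairs E a) = 2" "cut_pairs E x = {}"
    using t(1) mem_Omega_k t(2) mem_Omega0 by blast+
  have D: "pair_partition (sdiff a x) M" "sdiff a x \<subseteq> J"
    using t(3-5) by (simp_all add: Match_iff sdiff_subset)
  have cut_D: "cut_pairs E (sdiff a x) = cut_pairs E a"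
    using cut by (simp add: cut_pairs_sdiff)
  note route = two_cut_route_spec[OF D, folded ps_def, unfolded cut_D, OF cut(1)]
  have in_Omega: "sdiff a (flipped ps i) \<in> \<Omega> \<and> sdiff x (flipped ps i) \<in> \<Omega>"
    if "i \<le> length ps" for i
  proof -
    have "set (take i ps) \<subseteq> M"
      using route set_take_subset[of i ps] by blast
    moreover have "card (cut_pairs E (flipped ps i)) \<in> {0, 2}"
      "card (sdiff (cut_pairs E a) (cut_pairs E (flipped ps i))) \<in> {0, 2}"
      using route that by blast+
    ultimately show ?thesis
      using flipped_in_Omega[OF t(3-6)] cut unfolding flipped_def by (simp add: cut_pairs_sdiff)
  qed
  from in_Omega[of "length ps"] have "sdiff a (\<Union>(set ps)) \<in> \<Omega>" "sdiff x (\<Union>(set ps)) \<in> \<Omega>"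
    by (simp_all add: flipped_length)
  moreover have "cut_pairs E (sdiff a (\<Union>(set ps))) = {}"
    "card (cut_pairs E (sdiff x (\<Union>(set ps)))) = 2"
    using route cut by (simp_all add: cut_pairs_sdiff)
  ultimately show ?thesis
    using route in_Omega unfolding ps_def by (simp add: admissible_route_def mem_Omega mem_Omega0 mem_Omega_k)
qed

lemma Omega2_route_le:
  "(\<Sum>(a, x, M)\<in>windings \<Omega>\<^sub>2 \<Omega>\<^sub>0. Br a x M * (h a - h (sdiff a (\<Union>(set (two_cut_route M)))))\<^sup>2)
     \<le> real (card J) / 2 * Z * energy h"
  using two_cut_route_admissible Omega_eq_Un by (intro congestion windings_mono) auto

lemma two_cut_route_transport:
  assumes t: "(a, x, M) \<in> windings \<Omega>\<^sub>2 \<Omega>\<^sub>0"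
  defines "U \<equiv> \<Union>(set (two_cut_route M))"
  shows "(sdiff a U, sdiff x U, M) \<in> windings \<Omega>\<^sub>0 \<Omega>\<^sub>2 \<and> B (sdiff a U) (sdiff x U) M = B a x M"
proof -
  note mem = windings_memD[OF t Omega2_subset_Pow Omega0_subset_Pow]
  have "B a x M = B (sdiff a U) (sdiff x U) M"
    using B_flip_Union[OF mem(3-5)] two_cut_route_admissible[OF t]
    by (simp add: U_def admissible_route_def)
  then show ?thesis
    using mem two_cut_route_admissible[OF t] by (simp add: U_def windings_def)
qed

text \<open>Flipping along its route moves the pair \<open>(a, x)\<close> from \<open>\<Omega>\<^sub>2 \<times> \<Omega>\<^sub>0\<close> to
  \<open>\<Omega>\<^sub>0 \<times> \<Omega>\<^sub>2\<close>, injectively and without changing \<open>B\<close>.\<close>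
lemma Omega2_transport_le:
  assumes g: "\<And>b. b \<in> \<Omega>\<^sub>0 \<Longrightarrow> 0 \<le> g b"
  shows "(\<Sum>(a, x, M)\<in>windings \<Omega>\<^sub>2 \<Omega>\<^sub>0. Br a x M * g (sdiff a (\<Union>(set (two_cut_route M)))))
           \<le> Z\<^sub>2 * (\<Sum>b\<in>\<Omega>\<^sub>0. Fr b * g b)"
proof -
  define U where "U M = \<Union>(set (two_cut_route M))" for M
  define transport where "transport = (\<lambda>(a, x, M). (sdiff a (U M), sdiff x (U M), M))"
  define G where "G = (\<lambda>(b :: 'a set, y :: 'a set, N). Br b y N * g b)"
  have transport: "transport t \<in> windings \<Omega>\<^sub>0 \<Omega>\<^sub>2 \<and> G (transport t) = (case t of (a, x, M) \<Rightarrow> Br a x M * g (sdiff a (U M)))"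
    if "t \<in> windings \<Omega>\<^sub>2 \<Omega>\<^sub>0" for t
    using that two_cut_route_transport
    by (auto simp: transport_def G_def U_def Br_def split: prod.splits)
  have "(\<Sum>(a, x, M)\<in>windings \<Omega>\<^sub>2 \<Omega>\<^sub>0. Br a x M * g (sdiff a (U M))) = sum (G \<circ> transport) (windings \<Omega>\<^sub>2 \<Omega>\<^sub>0)"
    using transport by (intro sum.cong refl) simp
  also have "\<dots> = sum G (transport ` windings \<Omega>\<^sub>2 \<Omega>\<^sub>0)"
    unfolding transport_def by (simp add: sum.reindex[OF inj_on_flip_triples])
  also have "\<dots> \<le> sum G (windings \<Omega>\<^sub>0 \<Omega>\<^sub>2)"
  proof (rule sum_mono2[OF finite_windings[OF Omega0_subset_Pow Omega2_subset_Pow]])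
    show "transport ` windings \<Omega>\<^sub>2 \<Omega>\<^sub>0 \<subseteq> windings \<Omega>\<^sub>0 \<Omega>\<^sub>2"
      using transport by blast
    fix t assume "t \<in> windings \<Omega>\<^sub>0 \<Omega>\<^sub>2 - transport ` windings \<Omega>\<^sub>2 \<Omega>\<^sub>0"
    moreover obtain b y N where "t = (b, y, N)"
      by (metis prod.exhaust)
    ultimately show "0 \<le> G t"
      using windings_memD[of b y N, OF _ Omega0_subset_Pow Omega2_subset_Pow] g
      by (auto simp: G_def intro!: mult_nonneg_nonneg Br_nonneg)
  qed
  also have "\<dots> = (\<Sum>b\<in>\<Omega>\<^sub>0. \<Sum>y\<in>\<Omega>\<^sub>2. Fr b * Fr y * g b)"
    unfolding G_def by (rule sum_windings[OF Omega0_subset_Pow Omega2_subset_Pow])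
  also have "\<dots> = Z\<^sub>2 * (\<Sum>b\<in>\<Omega>\<^sub>0. Fr b * g b)"
    by (simp add: Z\<^sub>2_def sum_distrib_left sum_distrib_right mult_ac)
  finally show ?thesis
    unfolding U_def .
qed

lemma Z\<^sub>0_pos: "\<Omega>\<^sub>0 \<noteq> {} \<Longrightarrow> 0 < Z\<^sub>0"
  unfolding Z\<^sub>0_def using finite_Omega0 Fr_pos Omega_eq_Un
  by (intro sum_pos) auto

lemma Z\<^sub>2_nonneg: "0 \<le> Z\<^sub>2"
  unfolding Z\<^sub>2_def using Fr_pos Omega_eq_Un by (intro sum_nonneg) (auto intro: less_imp_le)

lemma Z_eq: "Z = Z\<^sub>0 + Z\<^sub>2"
  unfolding Z_def Z\<^sub>0_def Z\<^sub>2_def Omega_eq_Un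
  using finite_Omega0 finite_Omega2 Omega0_Int_Omega2 by (simp add: sum.union_disjoint)

lemma Omega0_centred_variance_le:
  assumes "0 < Z\<^sub>0" "(\<Sum>x\<in>\<Omega>\<^sub>0. Fr x * (h x - c)) = 0"
  shows "Z\<^sub>0 * (\<Sum>a\<in>\<Omega>\<^sub>0. Fr a * (h a - c)\<^sup>2) \<le> real (card J) / 4 * Z * energy h"
proof -
  have "2 * Z\<^sub>0 * (\<Sum>a\<in>\<Omega>\<^sub>0. Fr a * (h a - c)\<^sup>2) =
        (\<Sum>x\<in>\<Omega>\<^sub>0. \<Sum>y\<in>\<Omega>\<^sub>0. Fr x * Fr y * ((h x - c) - (h y - c))\<^sup>2)"
    by (simp only: sum_pair_squares_eq assms(2)) (simp add: Z\<^sub>0_def)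
  also have "\<dots> \<le> real (card J) / 2 * Z * energy h"
    using Omega0_variance_le[of h] by simp
  finally show ?thesis
    by simp
qed

text \<open>A point \<open>a\<close> of \<open>\<Omega>\<^sub>2\<close> is compared with the endpoint in \<open>\<Omega>\<^sub>0\<close> of its route, via
  \<open>(u + v)\<^sup>2 \<le> 3/2 u\<^sup>2 + 3 v\<^sup>2\<close>.\<close>
lemma Omega2_variance_le:
  "Z\<^sub>0 * (\<Sum>a\<in>\<Omega>\<^sub>2. Fr a * (h a - c)\<^sup>2)
     \<le> 3 / 4 * real (card J) * Z * energy h + 3 * Z\<^sub>2 * (\<Sum>a\<in>\<Omega>\<^sub>0. Fr a * (h a - c)\<^sup>2)"
proof -
  define a' where "a' a M = sdiff a (\<Union>(set (two_cut_route M)))" for a M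
  have "Z\<^sub>0 * (\<Sum>a\<in>\<Omega>\<^sub>2. Fr a * (h a - c)\<^sup>2) = (\<Sum>(a, x, M)\<in>windings \<Omega>\<^sub>2 \<Omega>\<^sub>0. Br a x M * (h a - c)\<^sup>2)"
    by (simp add: sum_windings[OF Omega2_subset_Pow Omega0_subset_Pow] Z\<^sub>0_def
        sum_distrib_left sum_distrib_right mult_ac)
  also have "\<dots> \<le> (\<Sum>(a, x, M)\<in>windings \<Omega>\<^sub>2 \<Omega>\<^sub>0.
      3 / 2 * (Br a x M * (h a - h (a' a M))\<^sup>2) + 3 * (Br a x M * (h (a' a M) - c)\<^sup>2))"
  proof (intro sum_mono)
    fix t assume "t \<in> windings \<Omega>\<^sub>2 \<Omega>\<^sub>0"
    moreover obtain a x M where "t = (a, x, M)"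
      by (metis prod.exhaust)
    ultimately have "0 \<le> Br a x M"
      using windings_memD[of a x M, OF _ Omega2_subset_Pow Omega0_subset_Pow] Br_nonneg by auto
    then have "Br a x M * (h a - c)\<^sup>2 \<le>
        Br a x M * (3 / 2 * (h a - h (a' a M))\<^sup>2 + 3 * (h (a' a M) - c)\<^sup>2)"
      using square_add_le[of "h a - h (a' a M)" "h (a' a M) - c"] by (intro mult_left_mono) simp_all
    then show "(case t of (a, x, M) \<Rightarrow> Br a x M * (h a - c)\<^sup>2)
          \<le> (case t of (a, x, M) \<Rightarrow> 3 / 2 * (Br a x M * (h a - h (a' a M))\<^sup>2) +
                                        3 * (Br a x M * (h (a' a M) - c)\<^sup>2))"
      using \<open>t = (a, x, M)\<close> by (simp add: algebra_simps)
  qed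
  also have "\<dots> = 3 / 2 * (\<Sum>(a, x, M)\<in>windings \<Omega>\<^sub>2 \<Omega>\<^sub>0. Br a x M * (h a - h (a' a M))\<^sup>2)
                   + 3 * (\<Sum>(a, x, M)\<in>windings \<Omega>\<^sub>2 \<Omega>\<^sub>0. Br a x M * (h (a' a M) - c)\<^sup>2)"
    by (simp add: sum.distrib sum_distrib_left split_def)
  also have "\<dots> \<le> 3 / 2 * (real (card J) / 2 * Z * energy h) + 3 * (Z\<^sub>2 * (\<Sum>a\<in>\<Omega>\<^sub>0. Fr a * (h a - c)\<^sup>2))"
    using Omega2_route_le[of h] Omega2_transport_le[of "\<lambda>b. (h b - c)\<^sup>2"]
    unfolding a'_def by (intro add_mono) auto
  finally show ?thesis
    by simp
qed

theorem poincare_inequality: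
  fixes h :: "'a set \<Rightarrow> real"
  assumes "\<Omega>\<^sub>0 \<noteq> {}"
  defines "c \<equiv> (\<Sum>x\<in>\<Omega>\<^sub>0. Fr x * h x) / Z\<^sub>0"
  shows "(\<Sum>a\<in>\<Omega>. Fr a * (h a - c)\<^sup>2) \<le> real (card J) * Z\<^sup>2 * energy h / Z\<^sub>0\<^sup>2"
proof -
  define K where "K = real (card J) * Z * energy h"
  define S\<^sub>0 where "S\<^sub>0 = (\<Sum>a\<in>\<Omega>\<^sub>0. Fr a * (h a - c)\<^sup>2)"
  define S\<^sub>2 where "S\<^sub>2 = (\<Sum>a\<in>\<Omega>\<^sub>2. Fr a * (h a - c)\<^sup>2)"
  have Z\<^sub>0: "0 < Z\<^sub>0"
    using Z\<^sub>0_pos[OF assms(1)] .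
  have K: "0 \<le> K"
    unfolding K_def using Z_eq Z\<^sub>0 Z\<^sub>2_nonneg energy_nonneg by simp
  have "(\<Sum>x\<in>\<Omega>\<^sub>0. Fr x * (h x - c)) = (\<Sum>x\<in>\<Omega>\<^sub>0. Fr x * h x) - c * Z\<^sub>0"
    by (simp add: Z\<^sub>0_def right_diff_distrib sum_subtractf sum_distrib_left mult.commute)
  then have "(\<Sum>x\<in>\<Omega>\<^sub>0. Fr x * (h x - c)) = 0"
    using Z\<^sub>0 by (simp add: c_def)
  from Omega0_centred_variance_le[OF Z\<^sub>0 this] have bound\<^sub>0: "Z\<^sub>0 * S\<^sub>0 \<le> K / 4"
    by (simp add: S\<^sub>0_def K_def)
  have bound\<^sub>2: "Z\<^sub>0 * S\<^sub>2 \<le> 3 / 4 * K + 3 * Z\<^sub>2 * S\<^sub>0"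
    using Omega2_variance_le[of h c] by (simp add: S\<^sub>0_def S\<^sub>2_def K_def)
  have "Z\<^sub>0\<^sup>2 * (S\<^sub>0 + S\<^sub>2) = Z\<^sub>0 * (Z\<^sub>0 * S\<^sub>0) + Z\<^sub>0 * (Z\<^sub>0 * S\<^sub>2)"
    by (simp add: power2_eq_square algebra_simps)
  also have "\<dots> \<le> Z\<^sub>0 * (K / 4) + Z\<^sub>0 * (3 / 4 * K + 3 * Z\<^sub>2 * S\<^sub>0)"
    using bound\<^sub>0 bound\<^sub>2 Z\<^sub>0 by (intro add_mono mult_left_mono) auto
  also have "\<dots> = Z\<^sub>0 * K + 3 * Z\<^sub>2 * (Z\<^sub>0 * S\<^sub>0)"
    by (simp add: algebra_simps)
  also have "\<dots> \<le> Z\<^sub>0 * K + 3 * Z\<^sub>2 * (K / 4)"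
    using bound\<^sub>0 Z\<^sub>2_nonneg by (intro add_left_mono mult_left_mono) auto
  also have "\<dots> \<le> Z * K"
    using K Z\<^sub>2_nonneg by (simp add: Z_eq algebra_simps)
  finally have "S\<^sub>0 + S\<^sub>2 \<le> Z * K / Z\<^sub>0\<^sup>2"
    using Z\<^sub>0 by (simp add: field_simps)
  moreover have "(\<Sum>a\<in>\<Omega>. Fr a * (h a - c)\<^sup>2) = S\<^sub>0 + S\<^sub>2"
    unfolding S\<^sub>0_def S\<^sub>2_def Omega_eq_Un
    using finite_Omega0 finite_Omega2 Omega0_Int_Omega2 by (simp add: sum.union_disjoint)
  ultimately show ?thesis
    by (simp add: K_def power2_eq_square mult_ac)
qed

end

section \<open>Reversible Markov chains\<close>

lemma weighted_Cauchy_Schwarz: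
  fixes w u :: "'b \<Rightarrow> real"
  assumes "\<And>i. i \<in> A \<Longrightarrow> 0 < w i"
  shows "(\<Sum>i\<in>A. \<bar>u i\<bar>)\<^sup>2 \<le> (\<Sum>i\<in>A. w i) * (\<Sum>i\<in>A. (u i)\<^sup>2 / w i)"
proof -
  have "(\<Sum>i\<in>A. \<bar>u i\<bar>) = (\<Sum>i\<in>A. sqrt (w i) * (\<bar>u i\<bar> / sqrt (w i)))"
  proof (intro sum.cong refl)
    fix i assume "i \<in> A"
    then have "sqrt (w i) \<noteq> 0"
      using assms by fastforce
    then show "\<bar>u i\<bar> = sqrt (w i) * (\<bar>u i\<bar> / sqrt (w i))"
      by simp
  qed
  also have "(\<dots>)\<^sup>2 \<le> (\<Sum>i\<in>A. (sqrt (w i))\<^sup>2) * (\<Sum>i\<in>A. (\<bar>u i\<bar> / sqrt (w i))\<^sup>2)"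
    by (rule Cauchy_Schwarz_ineq_sum)
  also have "\<dots> = (\<Sum>i\<in>A. w i) * (\<Sum>i\<in>A. (u i)\<^sup>2 / w i)"
    using assms by (simp add: less_imp_le power_divide)
  finally show ?thesis .
qed

locale reversible_chain =
  fixes S :: "'s set" and P :: "'s \<Rightarrow> 's \<Rightarrow> real" and \<pi> :: "'s \<Rightarrow> real"
  assumes finite_S: "finite S"
    and P_nonneg: "x \<in> S \<Longrightarrow> y \<in> S \<Longrightarrow> 0 \<le> P x y"
    and P_row_sum: "x \<in> S \<Longrightarrow> (\<Sum>y\<in>S. P x y) = 1"
    and \<pi>_pos: "x \<in> S \<Longrightarrow> 0 < \<pi> x"
    and \<pi>_sum: "(\<Sum>x\<in>S. \<pi> x) = 1"
    and detailed_balance: "x \<in> S \<Longrightarrow> y \<in> S \<Longrightarrow> \<pi> x * P x y = \<pi> y * P y x"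
begin

lemma \<pi>_neq_0: "x \<in> S \<Longrightarrow> \<pi> x \<noteq> 0"
  using \<pi>_pos by fastforce

definition dirichlet :: "('s \<Rightarrow> real) \<Rightarrow> real" where
  "dirichlet h = (\<Sum>y\<in>S. \<Sum>z\<in>S. \<pi> y * P y z * (h y - h z)\<^sup>2) / 2"

definition chi_square :: "('s \<Rightarrow> real) \<Rightarrow> real" where
  "chi_square \<mu> = (\<Sum>y\<in>S. (\<mu> y - \<pi> y)\<^sup>2 / \<pi> y)"

lemma chi_square_nonneg: "0 \<le> chi_square \<mu>"
  unfolding chi_square_def using \<pi>_pos by (intro sum_nonneg divide_nonneg_nonneg) (auto intro: less_imp_le)

lemma stationary:
  assumes "y \<in> S"
  shows "(\<Sum>x\<in>S. \<pi> x * P x y) = \<pi> y"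
proof -
  have "(\<Sum>x\<in>S. \<pi> x * P x y) = (\<Sum>x\<in>S. \<pi> y * P y x)"
    using detailed_balance assms by (intro sum.cong refl) auto
  also have "\<dots> = \<pi> y"
    using P_row_sum[OF assms] by (simp flip: sum_distrib_left)
  finally show ?thesis .
qed

lemma row_spread_ge:
  assumes "y \<in> S" "\<alpha> \<le> P y y"
  shows "2 * \<alpha> * (\<Sum>z\<in>S. P y z * (h y - h z)\<^sup>2) \<le> (\<Sum>z\<in>S. \<Sum>z'\<in>S. P y z * P y z' * (h z - h z')\<^sup>2)"
proof -
  define f where "f z z' = P y z * P y z' * (h z - h z')\<^sup>2" for z z'
  have f_nonneg: "0 \<le> f z z'" if "z \<in> S" "z' \<in> S" for z z'
    using that assms(1) by (simp add: f_def P_nonneg)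
  have "\<alpha> * (P y z * (h y - h z)\<^sup>2) \<le> f y z \<and> \<alpha> * (P y z * (h y - h z)\<^sup>2) \<le> f z y"
    if "z \<in> S" for z
  proof -
    have "\<alpha> * (P y z * (h y - h z)\<^sup>2) \<le> P y y * (P y z * (h y - h z)\<^sup>2)"
      using assms(2) P_nonneg[OF assms(1) that] by (intro mult_right_mono) auto
    then show ?thesis
      by (simp add: f_def power2_commute mult_ac)
  qed
  then have row: "\<alpha> * (\<Sum>z\<in>S. P y z * (h y - h z)\<^sup>2) \<le> (\<Sum>z\<in>S. f y z)"
    and column: "\<alpha> * (\<Sum>z\<in>S. P y z * (h y - h z)\<^sup>2) \<le> (\<Sum>z\<in>S. f z y)"
    by (simp_all add: sum_distrib_left sum_mono)
  have "(\<Sum>z\<in>S. f z y) = (\<Sum>z\<in>S - {y}. f z y)"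
    using assms(1) finite_S by (simp add: sum.remove f_def)
  also have "\<dots> \<le> (\<Sum>z\<in>S - {y}. \<Sum>z'\<in>S. f z z')"
    using assms(1) finite_S f_nonneg by (intro sum_mono member_le_sum) auto
  finally have "(\<Sum>z\<in>S. f y z) + (\<Sum>z\<in>S. f z y) \<le> (\<Sum>z\<in>S. \<Sum>z'\<in>S. f z z')"
    using assms(1) finite_S by (simp add: sum.remove[of S y "\<lambda>z. \<Sum>z'\<in>S. f z z'"])
  with row column show ?thesis
    unfolding f_def by linarith
qed

lemma lazy_contraction:
  assumes "\<And>y. y \<in> S \<Longrightarrow> \<alpha> \<le> P y y"
  shows "(\<Sum>y\<in>S. \<pi> y * (\<Sum>z\<in>S. P y z * h z)\<^sup>2) \<le> (\<Sum>y\<in>S. \<pi> y * (h y)\<^sup>2) - 2 * \<alpha> * dirichlet h"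
proof -
  have row: "(\<Sum>z\<in>S. P y z * h z)\<^sup>2 \<le> (\<Sum>z\<in>S. P y z * (h z)\<^sup>2) - \<alpha> * (\<Sum>z\<in>S. P y z * (h y - h z)\<^sup>2)"
    if "y \<in> S" for y
    using row_spread_ge[OF that assms[OF that], of h] sum_pair_squares_eq[of "P y" h S]
    by (simp add: P_row_sum[OF that])
  have "(\<Sum>y\<in>S. \<pi> y * (\<Sum>z\<in>S. P y z * h z)\<^sup>2) \<le>
      (\<Sum>y\<in>S. \<pi> y * ((\<Sum>z\<in>S. P y z * (h z)\<^sup>2) - \<alpha> * (\<Sum>z\<in>S. P y z * (h y - h z)\<^sup>2)))"
    using row \<pi>_pos by (intro sum_mono mult_left_mono) (auto intro: less_imp_le)
  also have "\<dots> = (\<Sum>y\<in>S. \<Sum>z\<in>S. \<pi> y * P y z * (h z)\<^sup>2) - 2 * \<alpha> * dirichlet h"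
    by (simp add: dirichlet_def sum_subtractf sum_distrib_left right_diff_distrib mult_ac)
  also have "(\<Sum>y\<in>S. \<Sum>z\<in>S. \<pi> y * P y z * (h z)\<^sup>2) = (\<Sum>z\<in>S. (\<Sum>y\<in>S. \<pi> y * P y z) * (h z)\<^sup>2)"
    by (subst sum.swap) (simp add: sum_distrib_right)
  also have "\<dots> = (\<Sum>y\<in>S. \<pi> y * (h y)\<^sup>2)"
    by (simp add: stationary)
  finally show ?thesis .
qed

lemma density_step:
  assumes "y \<in> S"
  shows "(\<Sum>z\<in>S. \<mu> z * P z y) / \<pi> y - 1 = (\<Sum>z\<in>S. P y z * (\<mu> z / \<pi> z - 1))"
proof -
  have "(\<Sum>z\<in>S. \<mu> z * P z y) / \<pi> y = (\<Sum>z\<in>S. P y z * (\<mu> z / \<pi> z))"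
    unfolding sum_divide_distrib
  proof (intro sum.cong refl)
    fix z assume "z \<in> S"
    then show "\<mu> z * P z y / \<pi> y = P y z * (\<mu> z / \<pi> z)"
      using detailed_balance[OF \<open>z \<in> S\<close> assms] \<pi>_pos[OF \<open>z \<in> S\<close>] \<pi>_pos[OF assms]
      by (simp add: field_simps)
  qed
  then show ?thesis
    using P_row_sum[OF assms] by (simp add: right_diff_distrib sum_subtractf)
qed

lemma chi_square_step:
  assumes lazy: "\<And>y. y \<in> S \<Longrightarrow> \<alpha> \<le> P y y" and "0 \<le> \<alpha>"
    and poincare: "\<And>h. (\<Sum>y\<in>S. \<pi> y * h y) = 0 \<Longrightarrow> (\<Sum>y\<in>S. \<pi> y * (h y)\<^sup>2) \<le> C * dirichlet h"
    and "0 < C" and total: "(\<Sum>y\<in>S. \<mu> y) = 1"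
  shows "chi_square (\<lambda>y. \<Sum>z\<in>S. \<mu> z * P z y) \<le> exp (- 2 * \<alpha> / C) * chi_square \<mu>"
proof -
  define h where "h z = \<mu> z / \<pi> z - 1" for z
  have chi: "chi_square \<nu> = (\<Sum>y\<in>S. \<pi> y * (\<nu> y / \<pi> y - 1)\<^sup>2)" for \<nu>
    unfolding chi_square_def using \<pi>_pos
    by (intro sum.cong refl) (simp add: power2_eq_square field_simps)
  have "(\<Sum>y\<in>S. \<pi> y * h y) = (\<Sum>y\<in>S. \<mu> y - \<pi> y)"
    using \<pi>_neq_0 by (intro sum.cong refl) (simp add: h_def right_diff_distrib)
  also have "\<dots> = (\<Sum>y\<in>S. \<mu> y) - (\<Sum>y\<in>S. \<pi> y)"
    by (rule sum_subtractf)
  finally have "(\<Sum>y\<in>S. \<pi> y * h y) = (\<Sum>y\<in>S. \<mu> y) - (\<Sum>y\<in>S. \<pi> y)" .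
  then have "(\<Sum>y\<in>S. \<pi> y * h y) = 0"
    using total \<pi>_sum by simp
  then have "(\<Sum>y\<in>S. \<pi> y * (h y)\<^sup>2) \<le> C * dirichlet h"
    by (rule poincare)
  then have "2 * \<alpha> * (\<Sum>y\<in>S. \<pi> y * (h y)\<^sup>2) \<le> 2 * \<alpha> * (C * dirichlet h)"
    using \<open>0 \<le> \<alpha>\<close> by (intro mult_left_mono) auto
  then have "2 * \<alpha> / C * (\<Sum>y\<in>S. \<pi> y * (h y)\<^sup>2) \<le> 2 * \<alpha> * dirichlet h"
    using \<open>0 < C\<close> by (simp add: field_simps)
  moreover have "chi_square (\<lambda>y. \<Sum>z\<in>S. \<mu> z * P z y) \<le> (\<Sum>y\<in>S. \<pi> y * (h y)\<^sup>2) - 2 * \<alpha> * dirichlet h"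
    using lazy_contraction[OF lazy, of h] by (simp add: chi density_step h_def)
  ultimately have "chi_square (\<lambda>y. \<Sum>z\<in>S. \<mu> z * P z y) \<le> (1 - 2 * \<alpha> / C) * chi_square \<mu>"
    by (simp add: chi h_def algebra_simps)
  also have "\<dots> \<le> exp (- 2 * \<alpha> / C) * chi_square \<mu>"
    using exp_ge_add_one_self[of "- 2 * \<alpha> / C"] chi_square_nonneg by (intro mult_right_mono) auto
  finally show ?thesis .
qed

lemma l1_distance_squared_le_chi_square: "(\<Sum>y\<in>S. \<bar>\<mu> y - \<pi> y\<bar>)\<^sup>2 \<le> chi_square \<mu>"
  using weighted_Cauchy_Schwarz[of S \<pi> "\<lambda>y. \<mu> y - \<pi> y"] \<pi>_pos by (simp add: \<pi>_sum chi_square_def)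

lemma sum_step: "(\<Sum>y\<in>S. \<Sum>z\<in>S. \<mu> z * P z y) = (\<Sum>z\<in>S. \<mu> z)"
  by (subst sum.swap) (simp add: P_row_sum flip: sum_distrib_left)

lemma chi_square_point_mass:
  assumes "x \<in> S"
  shows "chi_square (\<lambda>y. if x = y then 1 else 0) = 1 / \<pi> x - 1"
proof -
  have "chi_square (\<lambda>y. if x = y then 1 else 0) = (\<Sum>y\<in>S. (if x = y then 1 / \<pi> y - 2 else 0) + \<pi> y)"
    unfolding chi_square_def by (intro sum.cong refl) (auto simp: power2_eq_square field_simps \<pi>_neq_0)
  also have "\<dots> = 1 / \<pi> x - 1"
    using assms finite_S by (simp add: sum.distrib \<pi>_sum)
  finally show ?thesis .
qed

theorem l1_mixing_bound:
  assumes lazy: "\<And>y. y \<in> S \<Longrightarrow> \<alpha> \<le> P y y" and "0 \<le> \<alpha>"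
    and poincare: "\<And>h. (\<Sum>y\<in>S. \<pi> y * h y) = 0 \<Longrightarrow> (\<Sum>y\<in>S. \<pi> y * (h y)\<^sup>2) \<le> C * dirichlet h"
    and "0 < C" and "x \<in> S"
    and \<mu>_0: "\<And>y. \<mu> 0 y = (if x = y then 1 else 0)"
    and \<mu>_Suc: "\<And>t y. \<mu> (Suc t) y = (\<Sum>z\<in>S. \<mu> t z * P z y)"
  shows "(\<Sum>y\<in>S. \<bar>\<mu> t y - \<pi> y\<bar>) \<le> \<pi> x powr (-1/2) * exp (- real t * \<alpha> / C)"
proof -
  have total: "(\<Sum>y\<in>S. \<mu> t y) = 1" for t
    using \<open>x \<in> S\<close> finite_S by (induction t) (simp_all add: \<mu>_0 \<mu>_Suc sum_step)
  have chi_t: "chi_square (\<mu> t) \<le> exp (- 2 * \<alpha> / C) ^ t / \<pi> x" for t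
  proof (induction t)
    case 0
    then show ?case
      using chi_square_point_mass[OF \<open>x \<in> S\<close>] by (simp add: \<mu>_0[abs_def])
  next
    case (Suc t)
    have "chi_square (\<mu> (Suc t)) \<le> exp (- 2 * \<alpha> / C) * chi_square (\<mu> t)"
      unfolding \<mu>_Suc[abs_def] by (rule chi_square_step[OF lazy \<open>0 \<le> \<alpha>\<close> poincare \<open>0 < C\<close> total])
    also have "\<dots> \<le> exp (- 2 * \<alpha> / C) * (exp (- 2 * \<alpha> / C) ^ t / \<pi> x)"
      using Suc by (intro mult_left_mono) auto
    finally show ?case
      by simp
  qed
  have "exp (- 2 * \<alpha> / C) ^ t = (exp (- real t * \<alpha> / C))\<^sup>2"
    by (simp add: exp_of_nat_mult[symmetric] power2_eq_square exp_add[symmetric] mult_ac)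
  then have "(\<Sum>y\<in>S. \<bar>\<mu> t y - \<pi> y\<bar>)\<^sup>2 \<le> (exp (- real t * \<alpha> / C))\<^sup>2 / \<pi> x"
    using l1_distance_squared_le_chi_square[of "\<mu> t"] chi_t[of t] by simp
  then have "(\<Sum>y\<in>S. \<bar>\<mu> t y - \<pi> y\<bar>) \<le> sqrt ((exp (- real t * \<alpha> / C))\<^sup>2 / \<pi> x)"
    by (simp add: real_le_rsqrt)
  also have "\<dots> = \<pi> x powr (-1/2) * exp (- real t * \<alpha> / C)"
    using \<pi>_pos[OF \<open>x \<in> S\<close>] by (simp add: real_sqrt_divide powr_minus_divide powr_half_sqrt)
  finally show ?thesis .
qed

end

section \<open>The Metropolis chain\<close>

locale metropolis = even_winding J E F B for J :: "'a set" and E F B +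
  assumes card_J_ge_2: "2 \<le> card J" and Omega0_nonempty: "Omega_k J E F 0 \<noteq> {}"
begin

definition neighbours :: "'a set \<Rightarrow> 'a set set" where
  "neighbours x = {y\<in>\<Omega>. hdist x y = 2}"

lemma Z_pos: "0 < Z"
  using Z\<^sub>0_pos[OF Omega0_nonempty] Z\<^sub>2_nonneg by (simp add: Z_eq)

lemma pi_dist_eq: "pi_dist J E F x = Fr x / Z"
  by (simp add: pi_dist_def Fr_def Z_def)

lemma Pmat_hdist_2: "hdist x y = 2 \<Longrightarrow> Pmat J E F x y = 2 / real (card J) ^ 2 * min 1 (Fr y / Fr x)"
  by (simp add: Pmat_def Let_def Fr_def)

lemma Pmat_diag: "Pmat J E F x x = 1 - 2 / real (card J) ^ 2 * (\<Sum>y\<in>neighbours x. min 1 (Fr y / Fr x))"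
  by (simp add: Pmat_def Let_def Fr_def neighbours_def)

lemma Pmat_other: "hdist x y \<noteq> 2 \<Longrightarrow> x \<noteq> y \<Longrightarrow> Pmat J E F x y = 0"
  by (simp add: Pmat_def Let_def)

lemma card_neighbours_le:
  assumes "x \<in> \<Omega>"
  shows "card (neighbours x) \<le> card J choose 2"
proof -
  have "inj_on (sdiff x) (neighbours x)"
    by (rule inj_onI) simp
  moreover have "sdiff x ` neighbours x \<subseteq> {S. S \<subseteq> J \<and> card S = 2}"
  proof clarify
    fix y assume "y \<in> neighbours x"
    then have "x \<subseteq> J" "y \<subseteq> J" "hdist x y = 2"
      using assms by (auto simp: neighbours_def mem_Omega)
    then show "sdiff x y \<subseteq> J \<and> card (sdiff x y) = 2"
      by (simp add: sdiff_subset hdist_def)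
  qed
  moreover have "finite {S. S \<subseteq> J \<and> card S = 2}"
    using finite_J by simp
  ultimately have "card (neighbours x) \<le> card {S. S \<subseteq> J \<and> card S = 2}"
    by (metis card_image card_mono)
  then show ?thesis
    by (simp add: n_subsets[OF finite_J])
qed

text \<open>The chain is lazy: at most \<open>n(n-1)/2\<close> moves are proposed, each with probability
  \<open>2/n\<^sup>2\<close>.\<close>
lemma Pmat_diag_ge:
  assumes "x \<in> \<Omega>"
  shows "1 / real (card J) \<le> Pmat J E F x x"
proof -
  define n where "n = real (card J)"
  have n: "2 \<le> n"
    using card_J_ge_2 by (simp add: n_def)
  have "(\<Sum>y\<in>neighbours x. min 1 (Fr y / Fr x)) \<le> real (card (neighbours x))"
    using sum_bounded_above[of "neighbours x" "\<lambda>y. min 1 (Fr y / Fr x)" 1] by simp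
  also have "\<dots> \<le> real (card J choose 2)"
    using card_neighbours_le[OF assms] by simp
  also have "\<dots> = n * (n - 1) / 2"
    using card_J_ge_2 by (simp add: n_def choose_two real_of_nat_div)
  finally have "2 / n\<^sup>2 * (\<Sum>y\<in>neighbours x. min 1 (Fr y / Fr x)) \<le> 2 / n\<^sup>2 * (n * (n - 1) / 2)"
    using n by (intro mult_left_mono) auto
  also have "\<dots> = 1 - 1 / n"
    using n by (simp add: field_simps power2_eq_square)
  finally show ?thesis
    by (simp add: Pmat_diag n_def)
qed

lemma min_acceptance: "x \<in> \<Omega> \<Longrightarrow> Fr x * min 1 (Fr y / Fr x) = min (Fr x) (Fr y)"
  using Fr_pos[of x] by (simp add: min_def field_simps)

lemma pi_Pmat_off_diagonal:
  assumes "x \<in> \<Omega>" "x \<noteq> y"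
  shows "pi_dist J E F x * Pmat J E F x y =
    (if hdist x y = 2 then 2 / (real (card J) ^ 2 * Z) * min (Fr x) (Fr y) else 0)"
  using min_acceptance[OF assms(1), of y] assms(2)
  by (simp add: pi_dist_eq Pmat_hdist_2 Pmat_other)

sublocale chain: reversible_chain \<Omega> "Pmat J E F" "pi_dist J E F"
proof
  show "finite \<Omega>"
    by (rule finite_Omega)
  show "0 < pi_dist J E F x" if "x \<in> \<Omega>" for x
    using that Fr_pos Z_pos by (simp add: pi_dist_eq)
  show "(\<Sum>x\<in>\<Omega>. pi_dist J E F x) = 1"
    using Z_pos by (simp add: pi_dist_eq Z_def flip: sum_divide_distrib)
  show "0 \<le> Pmat J E F x y" if "x \<in> \<Omega>" "y \<in> \<Omega>" for x y
  proof (cases "x = y")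
    case True
    then show ?thesis
      using Pmat_diag_ge[OF that(1)] card_J_ge_2 by (smt (verit) divide_nonneg_nonneg of_nat_0_le_iff)
  next
    case False
    have "0 \<le> min 1 (Fr y / Fr x)"
      using that Fr_pos[of x] Fr_pos[of y] by simp
    with False show ?thesis
      by (cases "hdist x y = 2") (simp_all add: Pmat_hdist_2 Pmat_other)
  qed
  show "(\<Sum>y\<in>\<Omega>. Pmat J E F x y) = 1" if "x \<in> \<Omega>" for x
  proof -
    have "(\<Sum>y\<in>\<Omega> - {x}. Pmat J E F x y) = (\<Sum>y\<in>neighbours x. Pmat J E F x y)"
      using finite_Omega
      by (intro sum.mono_neutral_right) (auto simp: neighbours_def intro: Pmat_other)
    also have "\<dots> = 2 / real (card J) ^ 2 * (\<Sum>y\<in>neighbours x. min 1 (Fr y / Fr x))"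
      by (simp add: neighbours_def Pmat_hdist_2 sum_distrib_left)
    finally show ?thesis
      using that finite_Omega by (simp add: sum.remove Pmat_diag)
  qed
  show "pi_dist J E F x * Pmat J E F x y = pi_dist J E F y * Pmat J E F y x"
    if "x \<in> \<Omega>" "y \<in> \<Omega>" for x y
    using that pi_Pmat_off_diagonal[of x y] pi_Pmat_off_diagonal[of y x]
    by (cases "x = y") (auto simp: hdist_commute min.commute)
qed

lemma dirichlet_eq: "chain.dirichlet h = energy h / (real (card J) ^ 2 * Z)"
proof -
  have "(\<Sum>y\<in>\<Omega>. \<Sum>z\<in>\<Omega>. pi_dist J E F y * Pmat J E F y z * (h y - h z)\<^sup>2) =
        (\<Sum>y\<in>\<Omega>. \<Sum>z\<in>\<Omega>. 2 / (real (card J) ^ 2 * Z) *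
           (if hdist y z = 2 then min (Fr y) (Fr z) * (h y - h z)\<^sup>2 else 0))"
  proof (intro sum.cong refl)
    fix y z assume "y \<in> \<Omega>"
    show "pi_dist J E F y * Pmat J E F y z * (h y - h z)\<^sup>2 = 2 / (real (card J) ^ 2 * Z) *
           (if hdist y z = 2 then min (Fr y) (Fr z) * (h y - h z)\<^sup>2 else 0)"
      using pi_Pmat_off_diagonal[OF \<open>y \<in> \<Omega>\<close>, of z] by (cases "y = z") auto
  qed
  also have "\<dots> = 2 / (real (card J) ^ 2 * Z) * energy h"
    by (simp add: energy_def sum_distrib_left)
  finally show ?thesis
    by (simp add: chain.dirichlet_def)
qed

lemma poincare_pi:
  assumes "(\<Sum>y\<in>\<Omega>. pi_dist J E F y * h y) = 0"
  shows "(\<Sum>y\<in>\<Omega>. pi_dist J E F y * (h y)\<^sup>2) \<le> real (card J) ^ 3 * Z\<^sup>2 / Z\<^sub>0\<^sup>2 * chain.dirichlet h"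
proof -
  define c where "c = (\<Sum>x\<in>\<Omega>\<^sub>0. Fr x * h x) / Z\<^sub>0"
  have "(\<Sum>y\<in>\<Omega>. pi_dist J E F y * (h y - c)\<^sup>2) = (\<Sum>y\<in>\<Omega>. pi_dist J E F y * (h y)\<^sup>2)
      - 2 * c * (\<Sum>y\<in>\<Omega>. pi_dist J E F y * h y) + c\<^sup>2 * (\<Sum>y\<in>\<Omega>. pi_dist J E F y)"
    by (simp add: power2_diff sum.distrib sum_subtractf sum_distrib_left algebra_simps)
  also have "\<dots> = (\<Sum>y\<in>\<Omega>. pi_dist J E F y * (h y)\<^sup>2) + c\<^sup>2"
    using assms chain.\<pi>_sum by simp
  finally have "(\<Sum>y\<in>\<Omega>. pi_dist J E F y * (h y - c)\<^sup>2) = (\<Sum>y\<in>\<Omega>. pi_dist J E F y * (h y)\<^sup>2) + c\<^sup>2" .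
  then have "(\<Sum>y\<in>\<Omega>. pi_dist J E F y * (h y)\<^sup>2) \<le> (\<Sum>y\<in>\<Omega>. Fr y * (h y - c)\<^sup>2) / Z"
    by (simp add: pi_dist_eq sum_divide_distrib)
  also have "\<dots> \<le> real (card J) * Z\<^sup>2 * energy h / Z\<^sub>0\<^sup>2 / Z"
    using poincare_inequality[OF Omega0_nonempty, of h] Z_pos unfolding c_def
    by (intro divide_right_mono) auto
  also have "\<dots> = real (card J) ^ 3 * Z\<^sup>2 / Z\<^sub>0\<^sup>2 * chain.dirichlet h"
    using Z_pos card_J_ge_2 by (simp add: dirichlet_eq field_simps power2_eq_square power3_eq_cube)
  finally show ?thesis .
qed

theorem mixing_bound:
  assumes "x \<in> \<Omega>"
  shows "(\<Sum>y\<in>\<Omega>. \<bar>Ppow J E F t x y - pi_dist J E F y\<bar>)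
           \<le> pi_dist J E F x powr (-1/2) * exp (- real t * (Z\<^sub>0 / Z)\<^sup>2 / real (card J) ^ 4)"
proof -
  define C where "C = real (card J) ^ 3 * Z\<^sup>2 / Z\<^sub>0\<^sup>2"
  have "0 < C"
    using Z_pos Z\<^sub>0_pos[OF Omega0_nonempty] card_J_ge_2 by (simp add: C_def)
  have "(\<Sum>y\<in>\<Omega>. \<bar>Ppow J E F t x y - pi_dist J E F y\<bar>)
      \<le> pi_dist J E F x powr (-1/2) * exp (- real t * (1 / real (card J)) / C)"
    using Pmat_diag_ge poincare_pi \<open>0 < C\<close> assms unfolding C_def[symmetric]
    by (intro chain.l1_mixing_bound) auto
  also have "- real t * (1 / real (card J)) / C = - real t * (Z\<^sub>0 / Z)\<^sup>2 / real (card J) ^ 4"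
    using Z_pos Z\<^sub>0_pos[OF Omega0_nonempty] card_J_ge_2
    by (simp add: C_def field_simps power2_eq_square power3_eq_cube power4_eq_xxxx)
  finally show ?thesis .
qed

end

theorem theorem5:
  fixes J :: "'a set" and E :: "'a set set" and F :: "'a set \<Rightarrow> rat"
  assumes "finite J" and "card J \<ge> 2"
    and "pair_partition J E"
    and "\<forall>x. x \<subseteq> J \<longrightarrow> F x \<ge> 0"
    and "even_windable J F"
    and "Omega_k J E F 0 \<noteq> {}"
  shows "\<forall>x\<in>Omega J E F. \<forall>t::nat.
    (1/2) * (\<Sum>y\<in>Omega J E F. \<bar>Ppow J E F t x y - pi_dist J E F y\<bar>)
      \<le> (1/2) * (pi_dist J E F x) powr (-1/2)
          * exp (- real t * (\<Sum>z\<in>Omega_k J E F 0. pi_dist J E F z)^2 / real (card J)^4)"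
proof -
  obtain B :: "'a set \<Rightarrow> 'a set \<Rightarrow> 'a set set \<Rightarrow> rat" where
    "\<forall>x y M. x \<subseteq> J \<longrightarrow> y \<subseteq> J \<longrightarrow> M \<in> Match (sdiff x y) \<longrightarrow> 0 \<le> B x y M"
    "\<forall>x y. x \<subseteq> J \<longrightarrow> y \<subseteq> J \<longrightarrow> F x * F y = (\<Sum>M\<in>Match (sdiff x y). B x y M)"
    "\<forall>x y M S. x \<subseteq> J \<longrightarrow> y \<subseteq> J \<longrightarrow> M \<in> Match (sdiff x y) \<longrightarrow> S \<in> M \<longrightarrow>
       B x y M = B (sdiff x S) (sdiff y S) M"
    using assms(5) unfolding even_windable_def by (elim exE conjE) (rule that)
  then interpret metropolis J E F B
    using assms by unfold_locales auto
  have "(\<Sum>z\<in>Omega_k J E F 0. pi_dist J E F z) = Z\<^sub>0 / Z"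
    by (simp add: pi_dist_eq Z\<^sub>0_def sum_divide_distrib)
  then show ?thesis
    using mixing_bound by simp
qed

end
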